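(* (PBW) Let $F$ be a field, $G$ a group and $\chi: G\times G\to F$ a bicharacter. Let $L$ be a braided m-Lie algebra in ${}^{FG}_{FG}\mathcal{YD}$ whose braiding is determined by $\chi$. Let $E$ be a homogeneous basis of $L$, $B$ a set, $\varphi:E\to B$ a bijection extended linearly to $\varphi:L\to FB$, with $FB$ carrying the Yetter–Drinfeld structure transported from $L$ via $\varphi$, and $FB^*=T(FB)$ (the free algebra on the set $B^*$ of words) carrying the induced structure $g\cdot(x_1\cdots x_r)=(g\cdot x_1)\cdots(g\cdot x_r)$, $\deg(x_1\cdots x_r)=\deg x_1\cdots \deg x_r$. Put $[bc]:=\varphi([e,f])$ and $\chi(b,c):=\chi(g,h)$ for $b=\varphi(e)$, $c=\varphi(f)$, $e\in L_g\cap E$, $f\in L_h\cap E$. Let $\prec$ be an order on $B$, $P=\{b_1\cdots b_n\mid b_i\in B,\ b_n\prec\cdots\prec b_1,\ n\in\mathbb N\}$, $FP$ the subspace of $FB^*$ with basis $P$, and let $\lambda:FB^*\to FP$ be a linear map satisfying: (i) $\lambda(f)=f$ for $f\in P$; (ii) $\lambda(ubcv)=\chi(b,c)\lambda(ucbv)+\lambda(u[bc]v)$ for $u,v\in B^*$, $b,c\in B$; (iii) $\lambda(uv)=\lambda(\lambda(u)v)=\lambda(u\lambda(v))$ for $u,v\in FB^*$. Let $U(L)=FP$ with multiplication $u*v=\lambda(uv)$. Then $(U(L),\varphi)$ is the universal enveloping algebra of the braided m-Lie algebra $L$: $\varphi:L\to U(L)^-$ is a Lie algebra homomorphism in ${}^{FG}_{FG}\mathcal{YD}$,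 and for every algebra $W$ in ${}^{FG}_{FG}\mathcal{YD}$ and every Lie algebra homomorphism $\psi:L\to W^-$ in ${}^{FG}_{FG}\mathcal{YD}$ there exists a unique algebra homomorphism $\bar\psi:U(L)\to W$ in ${}^{FG}_{FG}\mathcal{YD}$ with $\bar\psi\circ\varphi=\psi$.
   Context: A bicharacter is a map $\chi:G\times G\to F$ with $\chi(ab,c)=\chi(a,c)\chi(b,c)$, $\chi(a,bc)=\chi(a,b)\chi(a,c)$, $\chi(a,e)=1=\chi(e,a)$. An $FG$-Yetter–Drinfeld module is a $G$-graded vector space $V=\oplus_g V_g$ with a left $G$-action such that $h\cdot V_g\subseteq V_{hgh^{-1}}$; these form the braided tensor category ${}^{FG}_{FG}\mathcal{YD}$. The braiding is determined by $\chi$ if $h\cdot x=\chi(h,g)x$ for $x\in V_g$; then $C(x\otimes y)=\chi(g,h)y\otimes x$ for $x\in V_g,y\in V_h$. An algebra in the category is an associative unital algebra which is a Yetter–Drinfeld module such that multiplication and unit respect action and grading; algebra homomorphisms in the category are algebra maps that are also Yetter–Drinfeld morphisms. For an algebra $W$ in the category, $W^-$ denotes $W$ with bracket $[x,y]=xy-\chi(g,h)yx$ for $x\in W_g$, $y\in W_h$ (extended bilinearly). A braided m-Lie algebra in the category is a Yetter–Drinfeld module $L$ with a morphism $[\ ,\ ]:L\otimes L\to L$ for which there exist an algebra $A$ in the category and an injective morphism $\phi:L\to A$ with $\phi([x,y])=\phi(x)\phi(y)-\chi(g,h)\phi(y)\phi(x)$ for $x\in L_g,y\in L_h$. A Lie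 algebra homomorphism $\psi:L\to W^-$ in the category is a Yetter–Drinfeld morphism with $\psi([x,y])=\psi(x)\psi(y)-\chi(g,h)\psi(y)\psi(x)$ for $x\in L_g,y\in L_h$. Expressions like $u[bc]v$ are understood by linearity. *)

theory Defs
  imports Main "HOL-Library.Function_Algebras"
begin

text \<open>
The group G is a type 'g of
class group_add (a not necessarily commutative group, written additively: the
product gh is g + h, the unit e is 0, h^-1 is - h).  Every vector space / YD module
/ algebra is given by a carrier set V in an ab_group_add type (its addition and zero
are those of the type), an explicit scalar multiplication, a family of homogeneous
components Vg, and an explicit G-action; algebras additionally by an explicit
multiplication and unit.
\<close>

definition module_on :: "'v::ab_group_add set \<Rightarrow> ('k::field \<Rightarrow> 'v \<Rightarrow> 'v) \<Rightarrow> bool" where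
  "module_on V s \<longleftrightarrow>
     0 \<in> V \<and> (\<forall>x\<in>V. \<forall>y\<in>V. x + y \<in> V) \<and> (\<forall>x\<in>V. - x \<in> V) \<and> (\<forall>c. \<forall>x\<in>V. s c x \<in> V) \<and>
     (\<forall>a. \<forall>x\<in>V. \<forall>y\<in>V. s a (x + y) = s a x + s a y) \<and>
     (\<forall>a b. \<forall>x\<in>V. s (a + b) x = s a x + s b x) \<and>
     (\<forall>a b. \<forall>x\<in>V. s a (s b x) = s (a * b) x) \<and>
     (\<forall>x\<in>V. s 1 x = x)"

definition lin_on :: "'v::ab_group_add set \<Rightarrow> ('k::field \<Rightarrow> 'v \<Rightarrow> 'v) \<Rightarrow>
                      'w::ab_group_add set \<Rightarrow> ('k \<Rightarrow> 'w \<Rightarrow> 'w) \<Rightarrow> ('v \<Rightarrow> 'w) \<Rightarrow> bool" where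
  "lin_on V sV W sW f \<longleftrightarrow>
     (\<forall>x\<in>V. f x \<in> W) \<and> (\<forall>x\<in>V. \<forall>y\<in>V. f (x + y) = f x + f y) \<and>
     (\<forall>c. \<forall>x\<in>V. f (sV c x) = sW c (f x))"

definition basis_on :: "'v::ab_group_add set \<Rightarrow> ('k::field \<Rightarrow> 'v \<Rightarrow> 'v) \<Rightarrow> 'v set \<Rightarrow> bool" where
  "basis_on V s E \<longleftrightarrow> E \<subseteq> V \<and>
     (\<forall>x\<in>V. \<exists>!c::'v \<Rightarrow> 'k. finite {e. c e \<noteq> 0} \<and> {e. c e \<noteq> 0} \<subseteq> E \<and>
                          x = (\<Sum>e\<in>{e. c e \<noteq> 0}. s (c e) e))"

definition graded_on :: "'v::ab_group_add set \<Rightarrow> ('k::field \<Rightarrow> 'v \<Rightarrow> 'v) \<Rightarrow> ('g \<Rightarrow> 'v set) \<Rightarrow> bool" where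
  "graded_on V s Vg \<longleftrightarrow>
     (\<forall>g. Vg g \<subseteq> V \<and> 0 \<in> Vg g \<and> (\<forall>x\<in>Vg g. \<forall>y\<in>Vg g. x + y \<in> Vg g) \<and>
          (\<forall>c. \<forall>x\<in>Vg g. s c x \<in> Vg g)) \<and>
     (\<forall>x\<in>V. \<exists>!c::'g \<Rightarrow> 'v. (\<forall>g. c g \<in> Vg g) \<and> finite {g. c g \<noteq> 0} \<and>
                          x = (\<Sum>g\<in>{g. c g \<noteq> 0}. c g))"

definition bicharacter :: "('g::group_add \<Rightarrow> 'g \<Rightarrow> 'k::field) \<Rightarrow> bool" where
  "bicharacter \<chi> \<longleftrightarrow>
     (\<forall>a b c. \<chi> (a + b) c = \<chi> a c * \<chi> b c) \<and> (\<forall>a b c. \<chi> a (b + c) = \<chi> a b * \<chi> a c) \<and>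
     (\<forall>a. \<chi> a 0 = 1 \<and> \<chi> 0 a = 1)"

definition yd_module :: "'v::ab_group_add set \<Rightarrow> ('k::field \<Rightarrow> 'v \<Rightarrow> 'v) \<Rightarrow> ('g::group_add \<Rightarrow> 'v set)
                         \<Rightarrow> ('g \<Rightarrow> 'v \<Rightarrow> 'v) \<Rightarrow> bool" where
  "yd_module V s Vg act \<longleftrightarrow>
     module_on V s \<and> graded_on V s Vg \<and>
     (\<forall>g. lin_on V s V s (act g)) \<and>
     (\<forall>x\<in>V. act 0 x = x) \<and> (\<forall>g h. \<forall>x\<in>V. act (g + h) x = act g (act h x)) \<and>
     (\<forall>h g. \<forall>x\<in>Vg g. act h x \<in> Vg (h + g + - h))"

text \<open>The braiding of V is determined by the bicharacter: h.x = chi(h,g) x for x in V_g.\<close>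
definition braiding_by :: "('g::group_add \<Rightarrow> 'g \<Rightarrow> 'k::field) \<Rightarrow> 'v::ab_group_add set \<Rightarrow>
                           ('k \<Rightarrow> 'v \<Rightarrow> 'v) \<Rightarrow> ('g \<Rightarrow> 'v set) \<Rightarrow> ('g \<Rightarrow> 'v \<Rightarrow> 'v) \<Rightarrow> bool" where
  "braiding_by \<chi> V s Vg act \<longleftrightarrow> (\<forall>g h. \<forall>x\<in>Vg g. act h x = s (\<chi> h g) x)"

definition yd_morphism :: "'v::ab_group_add set \<Rightarrow> ('k::field \<Rightarrow> 'v \<Rightarrow> 'v) \<Rightarrow> ('g::group_add \<Rightarrow> 'v set)
        \<Rightarrow> ('g \<Rightarrow> 'v \<Rightarrow> 'v) \<Rightarrow> 'w::ab_group_add set \<Rightarrow> ('k \<Rightarrow> 'w \<Rightarrow> 'w) \<Rightarrow> ('g \<Rightarrow> 'w set)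
        \<Rightarrow> ('g \<Rightarrow> 'w \<Rightarrow> 'w) \<Rightarrow> ('v \<Rightarrow> 'w) \<Rightarrow> bool" where
  "yd_morphism V sV Vg actV W sW Wg actW f \<longleftrightarrow>
     lin_on V sV W sW f \<and> (\<forall>g. \<forall>x\<in>Vg g. f x \<in> Wg g) \<and>
     (\<forall>g. \<forall>x\<in>V. f (actV g x) = actW g (f x))"

text \<open>Algebra in the category: associative unital F-algebra, YD module, with
  multiplication (a morphism from the tensor square, with diagonal action and
  product grading) and unit respecting action and grading.\<close>
definition yd_algebra :: "'v::ab_group_add set \<Rightarrow> ('k::field \<Rightarrow> 'v \<Rightarrow> 'v) \<Rightarrow> ('g::group_add \<Rightarrow> 'v set)
        \<Rightarrow> ('g \<Rightarrow> 'v \<Rightarrow> 'v) \<Rightarrow> ('v \<Rightarrow> 'v \<Rightarrow> 'v) \<Rightarrow> 'v \<Rightarrow> bool" where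
  "yd_algebra V s Vg act mult one \<longleftrightarrow>
     yd_module V s Vg act \<and> one \<in> V \<and> (\<forall>x\<in>V. \<forall>y\<in>V. mult x y \<in> V) \<and>
     (\<forall>x\<in>V. \<forall>y\<in>V. \<forall>z\<in>V. mult (x + y) z = mult x z + mult y z \<and> mult x (y + z) = mult x y + mult x z) \<and>
     (\<forall>c. \<forall>x\<in>V. \<forall>y\<in>V. mult (s c x) y = s c (mult x y) \<and> mult x (s c y) = s c (mult x y)) \<and>
     (\<forall>x\<in>V. \<forall>y\<in>V. \<forall>z\<in>V. mult (mult x y) z = mult x (mult y z)) \<and>
     (\<forall>x\<in>V. mult one x = x \<and> mult x one = x) \<and>
     (\<forall>g h. \<forall>x\<in>Vg g. \<forall>y\<in>Vg h. mult x y \<in> Vg (g + h)) \<and> one \<in> Vg 0 \<and>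
     (\<forall>h. \<forall>x\<in>V. \<forall>y\<in>V. act h (mult x y) = mult (act h x) (act h y)) \<and> (\<forall>h. act h one = one)"

definition yd_algebra_hom :: "'v::ab_group_add set \<Rightarrow> ('k::field \<Rightarrow> 'v \<Rightarrow> 'v) \<Rightarrow> ('g::group_add \<Rightarrow> 'v set)
        \<Rightarrow> ('g \<Rightarrow> 'v \<Rightarrow> 'v) \<Rightarrow> ('v \<Rightarrow> 'v \<Rightarrow> 'v) \<Rightarrow> 'v
        \<Rightarrow> 'w::ab_group_add set \<Rightarrow> ('k \<Rightarrow> 'w \<Rightarrow> 'w) \<Rightarrow> ('g \<Rightarrow> 'w set)
        \<Rightarrow> ('g \<Rightarrow> 'w \<Rightarrow> 'w) \<Rightarrow> ('w \<Rightarrow> 'w \<Rightarrow> 'w) \<Rightarrow> 'w \<Rightarrow> ('v \<Rightarrow> 'w) \<Rightarrow> bool" where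
  "yd_algebra_hom V sV Vg actV multV oneV W sW Wg actW multW oneW f \<longleftrightarrow>
     yd_morphism V sV Vg actV W sW Wg actW f \<and>
     (\<forall>x\<in>V. \<forall>y\<in>V. f (multV x y) = multW (f x) (f y)) \<and> f oneV = oneW"

text \<open>Lie algebra homomorphism psi : L \<rightarrow> W^- in the category, where the bracket of W^-
  is [x,y] = xy - chi(g,h) yx on homogeneous x in W_g, y in W_h.\<close>
definition lie_hom_minus :: "('g::group_add \<Rightarrow> 'g \<Rightarrow> 'k::field) \<Rightarrow>
        'v::ab_group_add set \<Rightarrow> ('k \<Rightarrow> 'v \<Rightarrow> 'v) \<Rightarrow> ('g \<Rightarrow> 'v set) \<Rightarrow> ('g \<Rightarrow> 'v \<Rightarrow> 'v) \<Rightarrow> ('v \<Rightarrow> 'v \<Rightarrow> 'v)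
        \<Rightarrow> 'w::ab_group_add set \<Rightarrow> ('k \<Rightarrow> 'w \<Rightarrow> 'w) \<Rightarrow> ('g \<Rightarrow> 'w set) \<Rightarrow> ('g \<Rightarrow> 'w \<Rightarrow> 'w)
        \<Rightarrow> ('w \<Rightarrow> 'w \<Rightarrow> 'w) \<Rightarrow> ('v \<Rightarrow> 'w) \<Rightarrow> bool" where
  "lie_hom_minus \<chi> L sL Lg actL br W sW Wg actW multW \<psi> \<longleftrightarrow>
     yd_morphism L sL Lg actL W sW Wg actW \<psi> \<and>
     (\<forall>g h. \<forall>x\<in>Lg g. \<forall>y\<in>Lg h.
        \<psi> (br x y) = multW (\<psi> x) (\<psi> y) - sW (\<chi> g h) (multW (\<psi> y) (\<psi> x)))"

text \<open>L with bracket br is a braided m-Lie algebra, witnessed by the algebra A in the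
  category and the injective morphism phiA : L \<rightarrow> A.  (The bracket is a YD morphism
  L \<otimes> L \<rightarrow> L: bilinear, degree-additive, and equivariant for the diagonal action.)\<close>
definition braided_mlie_witness :: "('g::group_add \<Rightarrow> 'g \<Rightarrow> 'k::field) \<Rightarrow>
        'v::ab_group_add set \<Rightarrow> ('k \<Rightarrow> 'v \<Rightarrow> 'v) \<Rightarrow> ('g \<Rightarrow> 'v set) \<Rightarrow> ('g \<Rightarrow> 'v \<Rightarrow> 'v) \<Rightarrow> ('v \<Rightarrow> 'v \<Rightarrow> 'v)
        \<Rightarrow> 'a::ab_group_add set \<Rightarrow> ('k \<Rightarrow> 'a \<Rightarrow> 'a) \<Rightarrow> ('g \<Rightarrow> 'a set) \<Rightarrow> ('g \<Rightarrow> 'a \<Rightarrow> 'a)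
        \<Rightarrow> ('a \<Rightarrow> 'a \<Rightarrow> 'a) \<Rightarrow> 'a \<Rightarrow> ('v \<Rightarrow> 'a) \<Rightarrow> bool" where
  "braided_mlie_witness \<chi> L sL Lg actL br A sA Ag actA multA oneA \<phi>A \<longleftrightarrow>
     yd_module L sL Lg actL \<and>
     (\<forall>x\<in>L. \<forall>y\<in>L. br x y \<in> L) \<and>
     (\<forall>x\<in>L. \<forall>y\<in>L. \<forall>z\<in>L. br (x + y) z = br x z + br y z \<and> br x (y + z) = br x y + br x z) \<and>
     (\<forall>c. \<forall>x\<in>L. \<forall>y\<in>L. br (sL c x) y = sL c (br x y) \<and> br x (sL c y) = sL c (br x y)) \<and>
     (\<forall>g h. \<forall>x\<in>Lg g. \<forall>y\<in>Lg h. br x y \<in> Lg (g + h)) \<and>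
     (\<forall>k. \<forall>x\<in>L. \<forall>y\<in>L. actL k (br x y) = br (actL k x) (actL k y)) \<and>
     yd_algebra A sA Ag actA multA oneA \<and>
     yd_morphism L sL Lg actL A sA Ag actA \<phi>A \<and> inj_on \<phi>A L \<and>
     (\<forall>g h. \<forall>x\<in>Lg g. \<forall>y\<in>Lg h.
        \<phi>A (br x y) = multA (\<phi>A x) (\<phi>A y) - sA (\<chi> g h) (multA (\<phi>A y) (\<phi>A x)))"

section \<open>The free algebra FB* = T(FB) on a set B, as finitely supported functions on words\<close>

definition fscale :: "'k::field \<Rightarrow> ('b list \<Rightarrow> 'k) \<Rightarrow> ('b list \<Rightarrow> 'k)" where
  "fscale c f = (\<lambda>w. c * f w)"

definition wdelta :: "'b list \<Rightarrow> ('b list \<Rightarrow> 'k::field)" where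
  "wdelta u = (\<lambda>w. if w = u then 1 else 0)"

definition conc :: "('b list \<Rightarrow> 'k::field) \<Rightarrow> ('b list \<Rightarrow> 'k) \<Rightarrow> ('b list \<Rightarrow> 'k)" where
  "conc f g = (\<lambda>w. \<Sum>i\<in>{0..length w}. f (take i w) * g (drop i w))"

definition FBstar :: "'b set \<Rightarrow> ('b list \<Rightarrow> 'k::field) set" where
  "FBstar B = {f. finite {w. f w \<noteq> 0} \<and> (\<forall>w. f w \<noteq> 0 \<longrightarrow> set w \<subseteq> B)}"

definition letter_deg :: "('g \<Rightarrow> 'l set) \<Rightarrow> 'l set \<Rightarrow> ('l \<Rightarrow> 'b) \<Rightarrow> 'b \<Rightarrow> 'g" where
  "letter_deg Lg E \<phi> b = (THE g. inv_into E \<phi> b \<in> Lg g)"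

definition word_deg :: "('b \<Rightarrow> 'g::group_add) \<Rightarrow> 'b list \<Rightarrow> 'g" where
  "word_deg d w = foldr (\<lambda>b acc. d b + acc) w 0"

definition FBstar_gr :: "'b set \<Rightarrow> ('b \<Rightarrow> 'g::group_add) \<Rightarrow> 'g \<Rightarrow> ('b list \<Rightarrow> 'k::field) set" where
  "FBstar_gr B d g = {f \<in> FBstar B. \<forall>w. f w \<noteq> 0 \<longrightarrow> word_deg d w = g}"

text \<open>Action on words: g.(x1...xr) = (g.x1)...(g.xr), where g.b = phi(g.e) for b = phi(e).\<close>
primrec act_word :: "('g \<Rightarrow> 'b \<Rightarrow> ('b list \<Rightarrow> 'k::field)) \<Rightarrow> 'g \<Rightarrow> 'b list \<Rightarrow> ('b list \<Rightarrow> 'k)" where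
  "act_word a g [] = wdelta []"
| "act_word a g (b # w) = conc (a g b) (act_word a g w)"

definition act_FBstar :: "('g \<Rightarrow> 'b \<Rightarrow> ('b list \<Rightarrow> 'k::field)) \<Rightarrow> 'g \<Rightarrow> ('b list \<Rightarrow> 'k) \<Rightarrow> ('b list \<Rightarrow> 'k)" where
  "act_FBstar a g f = (\<Sum>w\<in>{w. f w \<noteq> 0}. fscale (f w) (act_word a g w))"

text \<open>P = words b1...bn with bn \<preceq> ... \<preceq> b1 (non-strict chain).\<close>
definition Pwords :: "'b set \<Rightarrow> ('b \<Rightarrow> 'b \<Rightarrow> bool) \<Rightarrow> 'b list set" where
  "Pwords B prec = {w. set w \<subseteq> B \<and>
      (\<forall>i. Suc i < length w \<longrightarrow> prec (w ! Suc i) (w ! i) \<or> w ! Suc i = w ! i)}"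

definition FP :: "'b set \<Rightarrow> ('b \<Rightarrow> 'b \<Rightarrow> bool) \<Rightarrow> ('b list \<Rightarrow> 'k::field) set" where
  "FP B prec = {f \<in> FBstar B. \<forall>w. f w \<noteq> 0 \<longrightarrow> w \<in> Pwords B prec}"

definition strict_total_order_on :: "'b set \<Rightarrow> ('b \<Rightarrow> 'b \<Rightarrow> bool) \<Rightarrow> bool" where
  "strict_total_order_on B prec \<longleftrightarrow>
     (\<forall>x\<in>B. \<not> prec x x) \<and> (\<forall>x\<in>B. \<forall>y\<in>B. \<forall>z\<in>B. prec x y \<longrightarrow> prec y z \<longrightarrow> prec x z) \<and>
     (\<forall>x\<in>B. \<forall>y\<in>B. prec x y \<or> x = y \<or> prec y x)"

end

theory Submission
  imports Defs
begin

text \<open>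
  Multiplication on FP is u * v = lam(uv); associativity comes from the free algebra through
  rule (iii).  Since the braiding is diagonal, the degree of every basis vector of L is
  central, so G acts on a word by the character of its degree, and lam preserves degrees;
  this makes FP an algebra in the category.  Rule (ii) on a two-letter word gives the bracket
  relation for phi.  Given psi : L \<rightarrow> W^-, send a word to the product of the psi-images of its
  letters and extend linearly to FB*.  This map takes both sides of rule (ii) to the same
  element, because psi maps brackets to braided commutators; by induction on the length and
  the number of inversions of a word it therefore factors through lam, so it is multiplicative
  on U(L).  It is unique because the ordered words are products of letters in U(L).
\<close>

section \<open>Finitely supported functions on words\<close>

definition supp :: "('b list \<Rightarrow> 'k::zero) \<Rightarrow> 'b list set" where
  "supp f = {w. f w \<noteq> 0}"

lemma sum_apply: "(\<Sum>i\<in>S. F i) x = (\<Sum>i\<in>S. F i x)"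
  by (induct S rule: infinite_finite_induct) auto

lemma fscale_apply [simp]: "fscale c f w = c * f w"
  by (simp add: fscale_def)

lemma wdelta_apply: "wdelta u w = (if w = u then 1 else 0)"
  by (simp add: wdelta_def)

lemma fscale_add_right: "fscale c (f + g) = fscale c f + fscale c g"
  by (rule ext) (simp add: algebra_simps)

lemma fscale_add_left: "fscale (a + b) f = fscale a f + fscale b f"
  by (rule ext) (simp add: algebra_simps)

lemma fscale_fscale: "fscale a (fscale b f) = fscale (a * b) f"
  by (rule ext) (simp add: algebra_simps)

lemma fscale_one [simp]: "fscale 1 f = f"
  by (rule ext) simp

lemma fscale_diff: "fscale c (f - g) = fscale c f - fscale c g"
  by (rule ext) (simp add: algebra_simps)

lemma supp_add: "supp (f + g :: 'b list \<Rightarrow> 'k::ab_group_add) \<subseteq> supp f \<union> supp g"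
  by (auto simp: supp_def)

lemma supp_fscale: "supp (fscale c f) \<subseteq> supp f"
  by (auto simp: supp_def)

lemma supp_wdelta: "supp (wdelta w) = {w}"
  by (auto simp: supp_def wdelta_apply)

lemma supp_sum: "supp (\<Sum>i\<in>S. F i) \<subseteq> (\<Union>i\<in>S. supp (F i))"
  by (induct S rule: infinite_finite_induct) (auto simp: supp_def)

lemma supp_sum_wdelta: "supp (\<Sum>w\<in>S. fscale (c w) (wdelta (h w))) \<subseteq> h ` S"
proof -
  have "supp (\<Sum>w\<in>S. fscale (c w) (wdelta (h w))) \<subseteq> (\<Union>w\<in>S. supp (fscale (c w) (wdelta (h w))))"
    by (rule supp_sum)
  also have "\<dots> \<subseteq> h ` S"
    using supp_fscale supp_wdelta by fastforce
  finally show ?thesis .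
qed

lemma wdelta_expansion:
  assumes "finite S" "supp f \<subseteq> S"
  shows "f = (\<Sum>w\<in>S. fscale (f w) (wdelta w))"
proof (rule ext)
  fix x
  have "(\<Sum>w\<in>S. fscale (f w) (wdelta w)) x = (\<Sum>w\<in>S. if x = w then f w else 0)"
    unfolding sum_apply by (rule sum.cong) (auto simp: wdelta_apply)
  also have "\<dots> = f x"
    using assms by (auto simp: sum.delta supp_def)
  finally show "f x = (\<Sum>w\<in>S. fscale (f w) (wdelta w)) x" by simp
qed

lemma conc_add_left: "conc (f + g) h = conc f h + conc g h"
  by (rule ext) (simp add: conc_def algebra_simps sum.distrib)

lemma conc_add_right: "conc h (f + g) = conc h f + conc h g"
  by (rule ext) (simp add: conc_def algebra_simps sum.distrib)

lemma conc_fscale_left: "conc (fscale c f) h = fscale c (conc f h)"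
  by (rule ext) (simp add: conc_def sum_distrib_left mult.assoc)

lemma conc_fscale_right: "conc h (fscale c f) = fscale c (conc h f)"
  by (rule ext) (simp add: conc_def sum_distrib_left algebra_simps)

lemma conc_zero [simp]: "conc 0 h = 0" "conc h 0 = 0"
  by (rule ext, simp add: conc_def)+

lemma conc_sum_left: "conc (\<Sum>i\<in>S. F i) h = (\<Sum>i\<in>S. conc (F i) h)"
  by (induct S rule: infinite_finite_induct)
    (metis conc_zero(1) sum.infinite, metis conc_zero(1) sum.empty, metis conc_add_left sum.insert)

lemma conc_sum_right: "conc h (\<Sum>i\<in>S. F i) = (\<Sum>i\<in>S. conc h (F i))"
  by (induct S rule: infinite_finite_induct)
    (metis conc_zero(2) sum.infinite, metis conc_zero(2) sum.empty, metis conc_add_right sum.insert)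

lemma conc_wdelta: "conc (wdelta u) (wdelta v) = (wdelta (u @ v) :: 'b list \<Rightarrow> 'k::field)"
proof (rule ext)
  fix w :: "'b list"
  have split_term: "wdelta u (take i w) * (wdelta v (drop i w) :: 'k)
        = (if i = length u \<and> w = u @ v then 1 else 0)" if i: "i \<le> length w" for i
  proof (cases "i = length u \<and> w = u @ v")
    case True then show ?thesis by (simp add: wdelta_apply)
  next
    case False
    have "\<not> (take i w = u \<and> drop i w = v)"
    proof
      assume a: "take i w = u \<and> drop i w = v"
      then have "w = u @ v" by (metis append_take_drop_id)
      moreover have "i = length u" using a i by auto
      ultimately show False using False by simp
    qed
    then show ?thesis using False by (auto simp: wdelta_apply)
  qed
  have "conc (wdelta u) (wdelta v) w = (\<Sum>i\<in>{0..length w}. (if i = length u \<and> w = u @ v then 1 else 0) :: 'k)"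
    unfolding conc_def by (rule sum.cong[OF refl]) (simp add: split_term)
  also have "\<dots> = wdelta (u @ v) w"
    by (auto simp: wdelta_apply)
  finally show "conc (wdelta u) (wdelta v) w = (wdelta (u @ v) w :: 'k)" .
qed

lemma conc_one_left [simp]: "conc (wdelta []) f = f"
proof (rule ext)
  fix w
  have "conc (wdelta []) f w = (\<Sum>i\<in>{0..length w}. if i = 0 then f w else 0)"
    unfolding conc_def by (rule sum.cong) (auto simp: wdelta_apply)
  then show "conc (wdelta []) f w = f w" by simp
qed

lemma conc_one_right [simp]: "conc f (wdelta []) = f"
proof (rule ext)
  fix w
  have "conc f (wdelta []) w = (\<Sum>i\<in>{0..length w}. if i = length w then f w else 0)"
    unfolding conc_def by (rule sum.cong) (auto simp: wdelta_apply)
  then show "conc f (wdelta []) w = f w" by simp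
qed

lemma sum_triangle_swap:
  "(\<Sum>i=0..n. \<Sum>j=0..i. T j i) = (\<Sum>j=0..(n::nat). \<Sum>i=j..n. (T j i :: 'a::comm_monoid_add))"
proof (induct n)
  case 0 then show ?case by simp
next
  case (Suc n)
  have "(\<Sum>j=0..Suc n. \<Sum>i=j..Suc n. T j i) = (\<Sum>j=0..n. \<Sum>i=j..Suc n. T j i) + T (Suc n) (Suc n)"
    by simp
  also have "\<dots> = (\<Sum>j=0..n. (\<Sum>i=j..n. T j i) + T j (Suc n)) + T (Suc n) (Suc n)"
    by (intro arg_cong2[where f="(+)"] sum.cong refl) simp
  also have "\<dots> = (\<Sum>i=0..Suc n. \<Sum>j=0..i. T j i)"
    using Suc by (simp add: sum.distrib add.assoc)
  finally show ?case by simp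
qed

lemma conc_assoc:
  fixes f g h :: "'b list \<Rightarrow> 'k::field"
  shows "conc (conc f g) h = conc f (conc g h)"
proof (rule ext)
  fix w :: "'b list"
  define n where "n = length w"
  have "conc (conc f g) h w
      = (\<Sum>i=0..n. \<Sum>j=0..i. f (take j w) * g (drop j (take i w)) * h (drop i w))"
    unfolding conc_def n_def sum_distrib_right by (rule sum.cong[OF refl]) (simp add: min_def)
  also have "\<dots> = (\<Sum>j=0..n. \<Sum>i=j..n. f (take j w) * g (drop j (take i w)) * h (drop i w))"
    by (rule sum_triangle_swap)
  also have "\<dots> = conc f (conc g h) w"
    unfolding conc_def n_def sum_distrib_left
  proof (rule sum.cong[OF refl])
    fix j assume j: "j \<in> {0..length w}"
    have "(\<Sum>k=0..length (drop j w). f (take j w) * (g (take k (drop j w)) * h (drop k (drop j w))))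
        = (\<Sum>k=0..length w - j. f (take j w) * g (drop j (take (k + j) w)) * h (drop (k + j) w))"
      by (simp add: take_drop mult.assoc add.commute)
    also have "\<dots> = (\<Sum>i=j..length w. f (take j w) * g (drop j (take i w)) * h (drop i w))"
      using j by (intro sum.reindex_bij_witness[where i="\<lambda>i. i - j" and j="\<lambda>k. k + j"]) auto
    finally show "(\<Sum>i=j..length w. f (take j w) * g (drop j (take i w)) * h (drop i w))
      = (\<Sum>k=0..length (drop j w). f (take j w) * (g (take k (drop j w)) * h (drop k (drop j w))))"
      by simp
  qed
  finally show "conc (conc f g) h w = conc f (conc g h) w" .
qed

lemma supp_conc: "supp (conc f g) \<subseteq> (\<lambda>(u, v). u @ v) ` (supp f \<times> supp g)"
proof
  fix w assume "w \<in> supp (conc f g)"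
  then have "(\<Sum>i\<in>{0..length w}. f (take i w) * g (drop i w)) \<noteq> 0"
    by (simp add: supp_def conc_def)
  then obtain i where "f (take i w) * g (drop i w) \<noteq> 0"
    by (meson sum.neutral)
  then have "take i w \<in> supp f" "drop i w \<in> supp g" by (auto simp: supp_def)
  then show "w \<in> (\<lambda>(u, v). u @ v) ` (supp f \<times> supp g)"
    by (metis append_take_drop_id mem_Sigma_iff pair_imageI)
qed

lemma FBstar_iff: "f \<in> FBstar B \<longleftrightarrow> finite (supp f) \<and> (\<forall>w\<in>supp f. set w \<subseteq> B)"
  by (auto simp: FBstar_def supp_def)

lemma FP_iff: "f \<in> FP B prec \<longleftrightarrow> finite (supp f) \<and> (\<forall>w\<in>supp f. w \<in> Pwords B prec)"
  by (auto simp: FP_def FBstar_def supp_def Pwords_def)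

lemma FP_subset_FBstar: "FP B prec \<subseteq> FBstar B"
  by (auto simp: FP_def)

lemma FBstar_if_supp_subset:
  "f \<in> FBstar B \<Longrightarrow> g \<in> FBstar B \<Longrightarrow> supp h \<subseteq> supp f \<union> supp g \<Longrightarrow> h \<in> FBstar B"
  unfolding FBstar_iff by (metis (no_types, lifting) UnE finite_Un finite_subset subsetD)

lemma FP_if_supp_subset:
  "f \<in> FP B prec \<Longrightarrow> g \<in> FP B prec \<Longrightarrow> supp h \<subseteq> supp f \<union> supp g \<Longrightarrow> h \<in> FP B prec"
  unfolding FP_iff by (metis (no_types, lifting) UnE finite_Un finite_subset subsetD)

lemma FBstar_zero: "0 \<in> FBstar B"
  by (simp add: FBstar_iff supp_def)

lemma FBstar_add: "f \<in> FBstar B \<Longrightarrow> g \<in> FBstar B \<Longrightarrow> f + g \<in> FBstar B"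
  by (rule FBstar_if_supp_subset[OF _ _ supp_add])

lemma FBstar_uminus: "f \<in> FBstar B \<Longrightarrow> - f \<in> FBstar B"
  by (rule FBstar_if_supp_subset[of f B f]) (auto simp: supp_def)

lemma FBstar_fscale: "f \<in> FBstar B \<Longrightarrow> fscale c f \<in> FBstar B"
  by (rule FBstar_if_supp_subset[of f B f]) (use supp_fscale in auto)

lemma FBstar_wdelta: "set w \<subseteq> B \<Longrightarrow> wdelta w \<in> FBstar B"
  by (simp add: FBstar_iff supp_wdelta)

lemma FBstar_conc:
  assumes "f \<in> FBstar B" "g \<in> FBstar B"
  shows "conc f g \<in> FBstar B"
proof -
  have "finite ((\<lambda>(u, v). u @ v) ` (supp f \<times> supp g))"
    using assms by (simp add: FBstar_iff)
  moreover have "set w \<subseteq> B" if "w \<in> (\<lambda>(u, v). u @ v) ` (supp f \<times> supp g)" for w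
    using that assms by (fastforce simp: FBstar_iff)
  ultimately show ?thesis
    using supp_conc[of f g] unfolding FBstar_iff by (meson finite_subset subsetD)
qed

lemma FP_zero: "0 \<in> FP B prec"
  by (simp add: FP_iff supp_def)

lemma FP_add: "f \<in> FP B prec \<Longrightarrow> g \<in> FP B prec \<Longrightarrow> f + g \<in> FP B prec"
  by (rule FP_if_supp_subset[OF _ _ supp_add])

lemma FP_uminus: "f \<in> FP B prec \<Longrightarrow> - f \<in> FP B prec"
  by (rule FP_if_supp_subset[of f B prec f]) (auto simp: supp_def)

lemma FP_fscale: "f \<in> FP B prec \<Longrightarrow> fscale c f \<in> FP B prec"
  by (rule FP_if_supp_subset[of f B prec f]) (use supp_fscale in auto)

lemma FP_wdelta: "w \<in> Pwords B prec \<Longrightarrow> wdelta w \<in> FP B prec"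
  by (simp add: FP_iff supp_wdelta)

lemma FBstar_expansion: "f \<in> FBstar B \<Longrightarrow> f = (\<Sum>w\<in>supp f. fscale (f w) (wdelta w))"
  by (rule wdelta_expansion) (auto simp: FBstar_iff)

lemma Pwords_if_length_le_1: "set w \<subseteq> B \<Longrightarrow> length w \<le> 1 \<Longrightarrow> w \<in> Pwords B prec"
  by (auto simp: Pwords_def)

lemma Pwords_ConsD: "b # w \<in> Pwords B prec \<Longrightarrow> b \<in> B \<and> w \<in> Pwords B prec"
  by (auto simp: Pwords_def)

section \<open>Modules, bicharacters and degrees of words\<close>

lemma module_onD:
  assumes "module_on V s"
  shows "0 \<in> V" "x \<in> V \<Longrightarrow> y \<in> V \<Longrightarrow> x + y \<in> V" "x \<in> V \<Longrightarrow> - x \<in> V"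
    "x \<in> V \<Longrightarrow> s c x \<in> V" "x \<in> V \<Longrightarrow> y \<in> V \<Longrightarrow> s a (x + y) = s a x + s a y"
    "x \<in> V \<Longrightarrow> s (a + b) x = s a x + s b x" "x \<in> V \<Longrightarrow> s a (s b x) = s (a * b) x"
    "x \<in> V \<Longrightarrow> s 1 x = x"
  using assms unfolding module_on_def by blast+

lemma lin_onD:
  assumes "lin_on V sV W sW T"
  shows "x \<in> V \<Longrightarrow> T x \<in> W" "x \<in> V \<Longrightarrow> y \<in> V \<Longrightarrow> T (x + y) = T x + T y"
    "x \<in> V \<Longrightarrow> T (sV c x) = sW c (T x)"
  using assms unfolding lin_on_def by blast+

lemma module_scale_zero_left: "module_on V s \<Longrightarrow> x \<in> V \<Longrightarrow> s 0 x = 0"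
  using module_onD(6)[of V s x 0 0] by simp

lemma module_scale_zero_right: "module_on V s \<Longrightarrow> s c 0 = 0"
  using module_onD(5)[of V s 0 0 c] module_onD(1)[of V s] by simp

lemma module_diff: "module_on V s \<Longrightarrow> x \<in> V \<Longrightarrow> y \<in> V \<Longrightarrow> x - y \<in> V"
  using module_onD(2)[of V s x "- y"] module_onD(3)[of V s y] by simp

lemma module_sum: "module_on V s \<Longrightarrow> (\<And>i. i \<in> S \<Longrightarrow> F i \<in> V) \<Longrightarrow> (\<Sum>i\<in>S. F i) \<in> V"
  by (induct S rule: infinite_finite_induct) (simp_all add: module_onD(1,2))

lemma module_scale_sum:
  assumes "module_on V s" "\<And>i. i \<in> S \<Longrightarrow> F i \<in> V"
  shows "s c (\<Sum>i\<in>S. F i) = (\<Sum>i\<in>S. s c (F i))"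
  using assms(2)
  by (induct S rule: infinite_finite_induct)
    (simp_all add: module_scale_zero_right[OF assms(1)] module_onD(5)[OF assms(1)] module_sum[OF assms(1)])

lemma lin_zero: "lin_on V sV W sW T \<Longrightarrow> module_on V sV \<Longrightarrow> T 0 = 0"
  using lin_onD(2)[of V sV W sW T 0 0] module_onD(1)[of V sV] by simp

lemma lin_sum:
  assumes "lin_on V sV W sW T" "module_on V sV" "\<And>i. i \<in> S \<Longrightarrow> F i \<in> V"
  shows "T (\<Sum>i\<in>S. F i) = (\<Sum>i\<in>S. T (F i))"
  using assms(3)
  by (induct S rule: infinite_finite_induct)
    (simp_all add: lin_zero[OF assms(1,2)] lin_onD(2)[OF assms(1)] module_sum[OF assms(2)])

lemma module_FBstar: "module_on (FBstar B) fscale"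
  unfolding module_on_def by (simp add: fscale_add_right fscale_add_left fscale_fscale
      FBstar_zero FBstar_add FBstar_uminus FBstar_fscale)

lemma module_FP: "module_on (FP B prec) fscale"
  unfolding module_on_def by (simp add: fscale_add_right fscale_add_left fscale_fscale
      FP_zero FP_add FP_uminus FP_fscale)

lemma bicharacter_zero_right: "bicharacter \<chi> \<Longrightarrow> \<chi> a 0 = 1"
  and bicharacter_zero_left: "bicharacter \<chi> \<Longrightarrow> \<chi> 0 a = 1"
  and bicharacter_add_left: "bicharacter \<chi> \<Longrightarrow> \<chi> (a + b) c = \<chi> a c * \<chi> b c"
  and bicharacter_add_right: "bicharacter \<chi> \<Longrightarrow> \<chi> a (b + c) = \<chi> a b * \<chi> a c"
  unfolding bicharacter_def by blast+

lemma bicharacter_nonzero: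
  assumes "bicharacter \<chi>"
  shows "\<chi> h g \<noteq> 0"
  using bicharacter_add_left[OF assms, of h "- h" g] bicharacter_zero_left[OF assms] by auto

lemmas bicharacter_simps =
  bicharacter_zero_right bicharacter_zero_left bicharacter_add_left bicharacter_add_right

lemma word_deg_Nil [simp]: "word_deg d [] = 0"
  by (simp add: word_deg_def)

lemma word_deg_Cons [simp]: "word_deg d (b # w) = d b + word_deg d w"
  by (simp add: word_deg_def)

lemma word_deg_append [simp]: "word_deg d (u @ v) = word_deg d u + word_deg d v"
  by (induct u) (simp_all add: add.assoc)

definition central :: "'g::group_add \<Rightarrow> bool" where
  "central g \<longleftrightarrow> (\<forall>h. h + g = g + h)"

lemma central_add: "central a \<Longrightarrow> central b \<Longrightarrow> central (a + b)"
  unfolding central_def by (metis add.assoc)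

lemma central_word_deg: "(\<And>b. b \<in> set w \<Longrightarrow> central (d b)) \<Longrightarrow> central (word_deg d w)"
  by (induct w) (auto simp: central_add, simp add: central_def)

lemma central_conj: "central g \<Longrightarrow> h + g + - h = g"
  unfolding central_def by (metis add.assoc add.right_inverse add_0_right)

definition homogeneous :: "('b \<Rightarrow> 'g::group_add) \<Rightarrow> 'g \<Rightarrow> ('b list \<Rightarrow> 'k::zero) \<Rightarrow> bool" where
  "homogeneous d g f \<longleftrightarrow> (\<forall>w\<in>supp f. word_deg d w = g)"

lemma homogeneous_zero: "homogeneous d g 0"
  by (simp add: homogeneous_def supp_def)

lemma homogeneous_add:
  "homogeneous d g f \<Longrightarrow> homogeneous d g f' \<Longrightarrow> homogeneous d g (f + f' :: 'b list \<Rightarrow> 'k::ab_group_add)"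
  unfolding homogeneous_def using supp_add[of f f'] by blast

lemma homogeneous_fscale: "homogeneous d g f \<Longrightarrow> homogeneous d g (fscale c f)"
  unfolding homogeneous_def using supp_fscale[of c f] by blast

lemma homogeneous_sum:
  "(\<And>i. i \<in> S \<Longrightarrow> homogeneous d g (F i)) \<Longrightarrow> homogeneous d g (\<Sum>i\<in>S. F i :: 'b list \<Rightarrow> 'k::field)"
  by (induct S rule: infinite_finite_induct) (simp_all add: homogeneous_zero homogeneous_add)

lemma homogeneous_wdelta: "homogeneous d (word_deg d w) (wdelta w)"
  by (simp add: homogeneous_def supp_wdelta)

lemma homogeneous_conc:
  assumes "homogeneous d g f" "homogeneous d h f'"
  shows "homogeneous d (g + h) (conc f f')"
  unfolding homogeneous_def
proof
  fix w assume "w \<in> supp (conc f f')"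
  then obtain u v where "u \<in> supp f" "v \<in> supp f'" "w = u @ v"
    using supp_conc[of f f'] by auto
  then show "word_deg d w = g + h" using assms by (simp add: homogeneous_def)
qed

lemma FBstar_gr_iff: "f \<in> FBstar_gr B d g \<longleftrightarrow> f \<in> FBstar B \<and> homogeneous d g f"
  by (auto simp: FBstar_gr_def homogeneous_def supp_def)

definition degree_part :: "('b \<Rightarrow> 'g::group_add) \<Rightarrow> 'g \<Rightarrow> ('b list \<Rightarrow> 'k::zero) \<Rightarrow> ('b list \<Rightarrow> 'k)" where
  "degree_part d g f = (\<lambda>w. if word_deg d w = g then f w else 0)"

lemma degree_part_FP:
  "f \<in> FP B prec \<Longrightarrow> degree_part d g f \<in> FBstar_gr B d g \<inter> FP B prec"
proof -
  assume f: "f \<in> FP B prec"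
  have "supp (degree_part d g f) \<subseteq> supp f"
    by (auto simp: supp_def degree_part_def)
  then have "degree_part d g f \<in> FP B prec"
    using FP_if_supp_subset[OF f f] by blast
  moreover have "homogeneous d g (degree_part d g f)"
    by (auto simp: homogeneous_def supp_def degree_part_def)
  ultimately show ?thesis
    using FP_subset_FBstar FBstar_gr_iff by blast
qed

lemma sum_degree_parts:
  assumes "finite (supp f)"
  shows "finite {g. degree_part d g f \<noteq> 0}" and "f = (\<Sum>g\<in>{g. degree_part d g f \<noteq> 0}. degree_part d g f)"
proof -
  let ?G = "{g. degree_part d g f \<noteq> 0}"
  have "?G \<subseteq> word_deg d ` supp f"
    by (auto simp: degree_part_def supp_def fun_eq_iff split: if_splits)
  then show fin: "finite ?G"
    using assms by (meson finite_imageI finite_subset)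
  show "f = (\<Sum>g\<in>?G. degree_part d g f)"
  proof (rule ext)
    fix w
    have "(\<Sum>g\<in>?G. degree_part d g f) w = (\<Sum>g\<in>?G. if word_deg d w = g then f w else 0)"
      unfolding sum_apply by (simp add: degree_part_def)
    also have "\<dots> = (if word_deg d w \<in> ?G then f w else 0)"
      by (simp add: sum.delta[OF fin] eq_commute[of "word_deg d w"] cong: if_cong)
    also have "\<dots> = f w"
      by (cases "f w = 0") (auto simp: degree_part_def fun_eq_iff)
    finally show "f w = (\<Sum>g\<in>?G. degree_part d g f) w" by simp
  qed
qed

lemma homogeneous_decomposition_unique:
  assumes "\<forall>g. homogeneous d g (c g)" "finite {g. c g \<noteq> 0}" "f = (\<Sum>g\<in>{g. c g \<noteq> 0}. c g)"
  shows "c = (\<lambda>g. degree_part d g f)"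
proof (intro ext)
  fix g w
  have vanish: "c g' w = 0" if "g' \<noteq> word_deg d w" for g'
    using assms(1) that by (auto simp: homogeneous_def supp_def)
  have "f w = (\<Sum>g'\<in>{g. c g \<noteq> 0}. if g' = word_deg d w then c g' w else 0)"
    using assms(3) vanish by (auto simp: sum_apply intro: sum.cong)
  also have "\<dots> = c (word_deg d w) w"
    using assms(2) by (auto simp: sum.delta')
  finally show "c g w = degree_part d g f w"
    using vanish[of g] by (auto simp: degree_part_def)
qed

lemma graded_FP: "graded_on (FP B prec) fscale (\<lambda>g. FBstar_gr B d g \<inter> FP B prec)"
  unfolding graded_on_def
proof (intro conjI allI ballI)
  fix g
  show "FBstar_gr B d g \<inter> FP B prec \<subseteq> FP B prec" by blast
  show "0 \<in> FBstar_gr B d g \<inter> FP B prec"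
    by (simp add: FBstar_gr_iff FBstar_zero FP_zero homogeneous_zero)
  show "x + y \<in> FBstar_gr B d g \<inter> FP B prec"
    if "x \<in> FBstar_gr B d g \<inter> FP B prec" "y \<in> FBstar_gr B d g \<inter> FP B prec" for x y
    using that by (simp add: FBstar_gr_iff FBstar_add FP_add homogeneous_add)
  show "fscale c x \<in> FBstar_gr B d g \<inter> FP B prec" if "x \<in> FBstar_gr B d g \<inter> FP B prec" for c x
    using that by (simp add: FBstar_gr_iff FBstar_fscale FP_fscale homogeneous_fscale)
next
  fix x assume x: "x \<in> FP B prec"
  then have fin: "finite (supp x)" by (simp add: FP_iff)
  show "\<exists>!c. (\<forall>g. c g \<in> FBstar_gr B d g \<inter> FP B prec) \<and> finite {g. c g \<noteq> 0}
                \<and> x = (\<Sum>g\<in>{g. c g \<noteq> 0}. c g)"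
  proof (rule ex1I[where a="\<lambda>g. degree_part d g x"], intro conjI allI)
    show "degree_part d g x \<in> FBstar_gr B d g \<inter> FP B prec" for g
      by (rule degree_part_FP[OF x])
  next
    fix c assume "(\<forall>g. c g \<in> FBstar_gr B d g \<inter> FP B prec) \<and> finite {g. c g \<noteq> 0}
                \<and> x = (\<Sum>g\<in>{g. c g \<noteq> 0}. c g)"
    then show "c = (\<lambda>g. degree_part d g x)"
      by (intro homogeneous_decomposition_unique) (auto simp: FBstar_gr_iff)
  qed (use sum_degree_parts[OF fin] in blast)+
qed

definition char_scale :: "('g::group_add \<Rightarrow> 'g \<Rightarrow> 'k::field) \<Rightarrow> ('b \<Rightarrow> 'g) \<Rightarrow> 'g
    \<Rightarrow> ('b list \<Rightarrow> 'k) \<Rightarrow> ('b list \<Rightarrow> 'k)" where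
  "char_scale \<chi> d h f = (\<lambda>w. \<chi> h (word_deg d w) * f w)"

lemma char_scale_add: "char_scale \<chi> d h (f + g) = char_scale \<chi> d h f + char_scale \<chi> d h g"
  by (rule ext) (simp add: char_scale_def algebra_simps)

lemma char_scale_fscale: "char_scale \<chi> d h (fscale c f) = fscale c (char_scale \<chi> d h f)"
  by (rule ext) (simp add: char_scale_def algebra_simps)

lemma char_scale_sum: "char_scale \<chi> d h (\<Sum>i\<in>S. F i) = (\<Sum>i\<in>S. char_scale \<chi> d h (F i))"
  by (rule ext) (simp add: char_scale_def sum_apply sum_distrib_left)

lemma char_scale_wdelta: "char_scale \<chi> d h (wdelta w) = fscale (\<chi> h (word_deg d w)) (wdelta w)"
  by (rule ext) (simp add: char_scale_def wdelta_apply)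

lemma char_scale_homogeneous: "homogeneous d g f \<Longrightarrow> char_scale \<chi> d h f = fscale (\<chi> h g) f"
  by (rule ext) (auto simp: char_scale_def homogeneous_def supp_def)

lemma supp_char_scale: "bicharacter \<chi> \<Longrightarrow> supp (char_scale \<chi> d h f) = supp f"
  by (auto simp: supp_def char_scale_def bicharacter_nonzero)

lemma char_scale_zero_left: "bicharacter \<chi> \<Longrightarrow> char_scale \<chi> d 0 f = f"
  by (rule ext) (simp add: char_scale_def bicharacter_simps)

lemma char_scale_plus: "bicharacter \<chi> \<Longrightarrow> char_scale \<chi> d (g + h) f = char_scale \<chi> d g (char_scale \<chi> d h f)"
  by (rule ext) (simp add: char_scale_def bicharacter_simps)

lemma conc_char_scale:
  assumes "bicharacter \<chi>"
  shows "conc (char_scale \<chi> d h f) (char_scale \<chi> d h f') = char_scale \<chi> d h (conc f f')"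
proof (rule ext)
  fix w
  have "\<chi> h (word_deg d w) = \<chi> h (word_deg d (take i w)) * \<chi> h (word_deg d (drop i w))" for i
    by (metis append_take_drop_id word_deg_append bicharacter_add_right[OF assms])
  then show "conc (char_scale \<chi> d h f) (char_scale \<chi> d h f') w = char_scale \<chi> d h (conc f f') w"
    unfolding conc_def char_scale_def sum_distrib_left by (simp add: ac_simps)
qed

lemma act_word_diagonal:
  assumes "bicharacter \<chi>" "\<forall>b\<in>B. a h b = fscale (\<chi> h (d b)) (wdelta [b])" "set w \<subseteq> B"
  shows "act_word a h w = fscale (\<chi> h (word_deg d w)) (wdelta w)"
  using assms(3)
proof (induct w)
  case (Cons b w)
  then show ?case
    using assms(2)
    by (simp del: fscale_apply add: conc_fscale_left conc_fscale_right conc_wdelta fscale_fscale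
        bicharacter_add_right[OF assms(1)] mult.commute)
qed (simp add: bicharacter_zero_right[OF assms(1)])

lemma act_FBstar_char_scale:
  assumes "bicharacter \<chi>" "\<forall>b\<in>B. a h b = fscale (\<chi> h (d b)) (wdelta [b])" "f \<in> FBstar B"
  shows "act_FBstar a h f = char_scale \<chi> d h f"
proof -
  have "act_FBstar a h f = (\<Sum>w\<in>supp f. fscale (f w) (char_scale \<chi> d h (wdelta w)))"
    unfolding act_FBstar_def supp_def[symmetric] using assms
    by (intro sum.cong) (auto simp: act_word_diagonal char_scale_wdelta FBstar_iff)
  also have "\<dots> = char_scale \<chi> d h f"
    by (subst (2) FBstar_expansion[OF assms(3)]) (simp add: char_scale_sum char_scale_fscale)
  finally show ?thesis .
qed

fun inversions :: "('b \<Rightarrow> 'b \<Rightarrow> bool) \<Rightarrow> 'b list \<Rightarrow> nat" where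
  "inversions p [] = 0"
| "inversions p (x # xs) = length (filter (p x) xs) + inversions p xs"

lemma inversions_swap:
  "p b c \<Longrightarrow> \<not> p c b \<Longrightarrow> inversions p (u @ b # c # v) = Suc (inversions p (u @ c # b # v))"
  by (induct u) auto

lemma not_Pwords_ascent:
  assumes "strict_total_order_on B prec" "set w \<subseteq> B" "w \<notin> Pwords B prec"
  obtains u b c v where "w = u @ b # c # v" "prec b c"
proof -
  obtain i where i: "Suc i < length w" "\<not> (prec (w ! Suc i) (w ! i) \<or> w ! Suc i = w ! i)"
    using assms(2,3) unfolding Pwords_def by auto
  have "w ! i \<in> B" "w ! Suc i \<in> B"
    using i(1) assms(2) by (auto intro: nth_mem[THEN subsetD[OF assms(2)]])
  then have "prec (w ! i) (w ! Suc i)"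
    using assms(1) i(2) unfolding strict_total_order_on_def by blast
  moreover have "w = take i w @ w ! i # w ! Suc i # drop (Suc (Suc i)) w"
    using i(1) by (simp add: id_take_nth_drop Cons_nth_drop_Suc)
  ultimately show ?thesis using that by blast
qed

text \<open>Induction along the rewriting by rule (ii): an unordered word has an ascent b c whose
  swap has fewer inversions, while the bracket term consists of shorter words.\<close>

lemma Pwords_rewrite_induct:
  assumes ord: "strict_total_order_on B prec"
    and ordered: "\<And>w. w \<in> Pwords B prec \<Longrightarrow> Q w"
    and swap: "\<And>u b c v. set u \<subseteq> B \<Longrightarrow> set v \<subseteq> B \<Longrightarrow> b \<in> B \<Longrightarrow> c \<in> B \<Longrightarrow> prec b c
        \<Longrightarrow> Q (u @ c # b # v)
        \<Longrightarrow> (\<And>w'. set w' \<subseteq> B \<Longrightarrow> length w' < Suc (Suc (length u + length v)) \<Longrightarrow> Q w')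
        \<Longrightarrow> Q (u @ b # c # v)"
    and w: "set w \<subseteq> B"
  shows "Q w"
  using w
proof (induction w rule: wf_induct[OF wf_measures[of "[length, inversions prec]"]])
  case (1 w)
  show ?case
  proof (cases "w \<in> Pwords B prec")
    case False
    then obtain u b c v where w: "w = u @ b # c # v" and bc: "prec b c"
      using not_Pwords_ascent[OF ord "1.prems"] by blast
    have B: "set u \<subseteq> B" "set v \<subseteq> B" "b \<in> B" "c \<in> B" using "1.prems" w by auto
    have "\<not> prec c b" using ord B(3,4) bc unfolding strict_total_order_on_def by blast
    then have "inversions prec w = Suc (inversions prec (u @ c # b # v))"
      using inversions_swap[of prec b c u v] bc w by simp
    then show ?thesis
      using swap[OF B bc] "1.IH" B w by (simp add: in_measures)
  qed (rule ordered)
qed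

section \<open>Graded vector spaces with a homogeneous basis\<close>

locale graded_basis =
  fixes s :: "'k::field \<Rightarrow> 'v::ab_group_add \<Rightarrow> 'v" and Vg :: "'g \<Rightarrow> 'v set" and E :: "'v set"
  assumes module: "module_on UNIV s"
    and graded: "graded_on UNIV s Vg"
    and basis: "basis_on UNIV s E"
    and basis_homogeneous: "\<forall>e\<in>E. \<exists>g. e \<in> Vg g"
begin

lemma grade_zero: "0 \<in> Vg g"
  and grade_add: "x \<in> Vg g \<Longrightarrow> y \<in> Vg g \<Longrightarrow> x + y \<in> Vg g"
  and grade_scale: "x \<in> Vg g \<Longrightarrow> s c x \<in> Vg g"
  using graded unfolding graded_on_def by blast+

lemma grade_sum: "(\<And>i. i \<in> S \<Longrightarrow> F i \<in> Vg g) \<Longrightarrow> (\<Sum>i\<in>S. F i) \<in> Vg g"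
  by (induct S rule: infinite_finite_induct) (simp_all add: grade_zero grade_add)

lemma basis_repr_unique:
  assumes "finite {e. c e \<noteq> 0}" "{e. c e \<noteq> 0} \<subseteq> E" "x = (\<Sum>e\<in>{e. c e \<noteq> 0}. s (c e) e)"
    and "finite {e. c' e \<noteq> 0}" "{e. c' e \<noteq> 0} \<subseteq> E" "x = (\<Sum>e\<in>{e. c' e \<noteq> 0}. s (c' e) e)"
  shows "c = c'"
  using basis assms unfolding basis_on_def by blast

lemma graded_repr_unique:
  assumes "\<forall>g. c g \<in> Vg g" "finite {g. c g \<noteq> 0}" "x = (\<Sum>g\<in>{g. c g \<noteq> 0}. c g)"
    and "\<forall>g. c' g \<in> Vg g" "finite {g. c' g \<noteq> 0}" "x = (\<Sum>g\<in>{g. c' g \<noteq> 0}. c' g)"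
  shows "c = c'"
  using graded assms unfolding graded_on_def by blast

lemma basis_nonzero:
  assumes "e \<in> E"
  shows "e \<noteq> 0"
proof
  assume "e = 0"
  let ?c = "\<lambda>x. if x = e then 1 else (0 :: 'k)"
  have "{x. ?c x \<noteq> 0} = {e}" by auto
  then have "(\<lambda>_. 0 :: 'k) = ?c"
    using basis_repr_unique[of "\<lambda>_. 0" 0 ?c] assms \<open>e = 0\<close> module_onD(8)[OF module] by simp
  then show False by (metis zero_neq_one)
qed

lemma single_component:
  assumes "x \<in> Vg g"
  shows "(\<forall>k. (if k = g then x else 0) \<in> Vg k) \<and> finite {k. (if k = g then x else 0) \<noteq> 0}
         \<and> x = (\<Sum>k\<in>{k. (if k = g then x else 0) \<noteq> 0}. if k = g then x else 0)"
proof -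
  have "{k. (if k = g then x else 0) \<noteq> 0} = (if x = 0 then {} else {g})" by auto
  then show ?thesis using assms grade_zero by auto
qed

lemma grade_unique:
  assumes "x \<in> Vg g" "x \<in> Vg h" "x \<noteq> 0"
  shows "g = h"
proof -
  have "(\<lambda>k. if k = g then x else 0) = (\<lambda>k. if k = h then x else 0)"
    using single_component[OF assms(1)] single_component[OF assms(2)]
    by (intro graded_repr_unique[where x = x]) blast+
  then show ?thesis using assms(3) by (metis (full_types))
qed

definition deg :: "'v \<Rightarrow> 'g" where
  "deg e = (THE g. e \<in> Vg g)"

lemma deg_eq: "e \<in> E \<Longrightarrow> e \<in> Vg g \<Longrightarrow> deg e = g"
  unfolding deg_def using grade_unique basis_nonzero by blast

lemma basis_in_deg: "e \<in> E \<Longrightarrow> e \<in> Vg (deg e)"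
  using basis_homogeneous deg_eq by metis

lemma span_induct:
  assumes "P 0" "\<And>x y. P x \<Longrightarrow> P y \<Longrightarrow> P (x + y)" "\<And>c x. P x \<Longrightarrow> P (s c x)"
    and "\<And>e. e \<in> E \<Longrightarrow> P e"
  shows "P x"
proof -
  have sum: "P (\<Sum>e\<in>S. s (c e) e)" if "S \<subseteq> E" for S c
    using that by (induct S rule: infinite_finite_induct) (simp_all add: assms)
  obtain c where "{e. c e \<noteq> 0} \<subseteq> E" "x = (\<Sum>e\<in>{e. c e \<noteq> 0}. s (c e) e)"
    using basis unfolding basis_on_def by blast
  then show ?thesis using sum by presburger
qed

text \<open>Grouping the basis expansion of a homogeneous x by degrees gives its decomposition
  into homogeneous components, which is x itself.\<close>

lemma basis_expansion_grade:
  assumes x: "x \<in> Vg g" and c: "finite {e. c e \<noteq> 0}" "{e. c e \<noteq> 0} \<subseteq> E"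
    "x = (\<Sum>e\<in>{e. c e \<noteq> 0}. s (c e) e)"
  shows "x = (\<Sum>e\<in>{e. c e \<noteq> 0 \<and> deg e = g}. s (c e) e)"
proof -
  define S where "S = {e. c e \<noteq> 0}"
  define y where "y k = (\<Sum>e\<in>{e \<in> S. deg e = k}. s (c e) e)" for k
  have finS: "finite S" using c(1) S_def by simp
  have y_grade: "y k \<in> Vg k" for k
    unfolding y_def using c(2) S_def
    by (intro grade_sum grade_scale) (metis (mono_tags, lifting) basis_in_deg mem_Collect_eq subsetD)
  have "y k = 0" if "k \<notin> deg ` S" for k
    using that by (auto simp: y_def intro!: sum.neutral)
  then have supp_y: "{k. y k \<noteq> 0} \<subseteq> deg ` S" by blast
  then have finy: "finite {k. y k \<noteq> 0}"
    using finS by (meson finite_imageI finite_subset)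
  have "x = (\<Sum>k\<in>deg ` S. y k)"
    unfolding c(3) y_def S_def[symmetric] by (rule sum.image_gen[OF finS])
  also have "\<dots> = (\<Sum>k\<in>{k. y k \<noteq> 0}. y k)"
    by (rule sum.mono_neutral_right) (use finS supp_y in auto)
  finally have "y = (\<lambda>k. if k = g then x else 0)"
    using single_component[OF x] y_grade finy by (intro graded_repr_unique[where x = x]) blast+
  then show ?thesis
    by (simp add: y_def S_def fun_eq_iff)
qed

lemma basis_coeff_in_grade:
  assumes x: "x \<in> Vg g" and c: "finite {e. c e \<noteq> 0}" "{e. c e \<noteq> 0} \<subseteq> E"
    "x = (\<Sum>e\<in>{e. c e \<noteq> 0}. s (c e) e)"
    and ce: "c e \<noteq> 0"
  shows "e \<in> Vg g"
proof -
  define c' where "c' e = (if deg e = g then c e else 0)" for e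
  have supp_c': "{e. c' e \<noteq> 0} = {e. c e \<noteq> 0 \<and> deg e = g}"
    by (auto simp: c'_def)
  have "finite {e. c' e \<noteq> 0}" "{e. c' e \<noteq> 0} \<subseteq> E"
    using c(1,2) unfolding supp_c' by auto
  moreover have "x = (\<Sum>e\<in>{e. c' e \<noteq> 0}. s (c' e) e)"
    unfolding supp_c' basis_expansion_grade[OF assms(1-4)] by (intro sum.cong refl) (simp add: c'_def)
  ultimately have "c = c'"
    by (rule basis_repr_unique[OF c])
  then have "c' e \<noteq> 0"
    using ce by simp
  then have "deg e = g"
    by (simp add: c'_def split: if_splits)
  then show ?thesis
    using ce c(2) basis_in_deg by blast
qed

lemma grade_span_induct:
  assumes "P 0" "\<And>x y. P x \<Longrightarrow> P y \<Longrightarrow> P (x + y)" "\<And>c x. P x \<Longrightarrow> P (s c x)"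
    and "\<And>e. e \<in> E \<Longrightarrow> e \<in> Vg g \<Longrightarrow> P e" and "x \<in> Vg g"
  shows "P x"
proof -
  obtain c where c: "finite {e. c e \<noteq> 0}" "{e. c e \<noteq> 0} \<subseteq> E" "x = (\<Sum>e\<in>{e. c e \<noteq> 0}. s (c e) e)"
    using basis unfolding basis_on_def by blast
  have "P (\<Sum>e\<in>S. s (c e) e)" if "S \<subseteq> {e. c e \<noteq> 0}" for S
    using that
  proof (induct S rule: infinite_finite_induct)
    case (insert e S)
    then have "e \<in> E" "e \<in> Vg g"
      using c(2) basis_coeff_in_grade[OF assms(5) c] by auto
    then show ?case using insert assms(2-4) by simp
  qed (simp_all add: assms(1))
  then show ?thesis using c(3) by simp
qed

lemma bilinear_eq_on_homogeneous:
  fixes F G :: "'v \<Rightarrow> 'v \<Rightarrow> 'w::ab_group_add"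
  assumes "\<And>x x' y. F (x + x') y = F x y + F x' y" "\<And>x y y'. F x (y + y') = F x y + F x y'"
    and "\<And>c x y. F (s c x) y = t c (F x y)" "\<And>c x y. F x (s c y) = t c (F x y)"
    and "\<And>x x' y. G (x + x') y = G x y + G x' y" "\<And>x y y'. G x (y + y') = G x y + G x y'"
    and "\<And>c x y. G (s c x) y = t c (G x y)" "\<And>c x y. G x (s c y) = t c (G x y)"
    and base: "\<And>e f. e \<in> E \<Longrightarrow> e \<in> Vg g \<Longrightarrow> f \<in> E \<Longrightarrow> f \<in> Vg h \<Longrightarrow> F e f = G e f"
    and "x \<in> Vg g" "y \<in> Vg h"
  shows "F x y = G x y"
proof -
  have zero: "F 0 y = 0" "F x 0 = 0" "G 0 y = 0" "G x 0 = 0" for x y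
    using assms(1)[of 0 0 y] assms(2)[of x 0 0] assms(5)[of 0 0 y] assms(6)[of x 0 0] by simp_all
  have on_basis: "F e y = G e y" if "e \<in> E" "e \<in> Vg g" for e
  proof (rule grade_span_induct[where P="\<lambda>y. F e y = G e y", OF _ _ _ _ assms(11)])
    show "F e f = G e f" if "f \<in> E" "f \<in> Vg h" for f
      using base \<open>e \<in> E\<close> \<open>e \<in> Vg g\<close> that by blast
  qed (simp_all only: zero assms(2,4,6,8))
  show ?thesis
    by (rule grade_span_induct[where P="\<lambda>x. F x y = G x y", OF _ _ _ on_basis assms(10)])
      (simp_all only: zero assms(1,3,5,7))
qed

end

section \<open>Algebras in the category\<close>

locale yd_alg =
  fixes W :: "'w::ab_group_add set" and sW :: "'k::field \<Rightarrow> 'w \<Rightarrow> 'w" and Wg :: "'g::group_add \<Rightarrow> 'w set"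
    and actW :: "'g \<Rightarrow> 'w \<Rightarrow> 'w" and multW :: "'w \<Rightarrow> 'w \<Rightarrow> 'w" and oneW :: 'w
  assumes yd_algebra: "yd_algebra W sW Wg actW multW oneW"
begin

lemma module: "module_on W sW"
  and graded: "graded_on W sW Wg"
  and act_lin: "lin_on W sW W sW (actW h)"
  using yd_algebra unfolding yd_algebra_def yd_module_def by simp_all

lemma grade_zero: "0 \<in> Wg g"
  and grade_add: "x \<in> Wg g \<Longrightarrow> y \<in> Wg g \<Longrightarrow> x + y \<in> Wg g"
  and grade_scale: "x \<in> Wg g \<Longrightarrow> sW c x \<in> Wg g"
  using graded unfolding graded_on_def by blast+

lemma one_in: "oneW \<in> W"
  and mult_in: "x \<in> W \<Longrightarrow> y \<in> W \<Longrightarrow> multW x y \<in> W"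
  and mult_add_left: "x \<in> W \<Longrightarrow> y \<in> W \<Longrightarrow> z \<in> W \<Longrightarrow> multW (x + y) z = multW x z + multW y z"
  and mult_add_right: "x \<in> W \<Longrightarrow> y \<in> W \<Longrightarrow> z \<in> W \<Longrightarrow> multW z (x + y) = multW z x + multW z y"
  and mult_scale_left: "x \<in> W \<Longrightarrow> y \<in> W \<Longrightarrow> multW (sW c x) y = sW c (multW x y)"
  and mult_scale_right: "x \<in> W \<Longrightarrow> y \<in> W \<Longrightarrow> multW x (sW c y) = sW c (multW x y)"
  and mult_assoc: "x \<in> W \<Longrightarrow> y \<in> W \<Longrightarrow> z \<in> W \<Longrightarrow> multW (multW x y) z = multW x (multW y z)"
  and mult_one_left: "x \<in> W \<Longrightarrow> multW oneW x = x"
  and mult_one_right: "x \<in> W \<Longrightarrow> multW x oneW = x"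
  and mult_grade: "x \<in> Wg g \<Longrightarrow> y \<in> Wg h \<Longrightarrow> multW x y \<in> Wg (g + h)"
  and one_grade: "oneW \<in> Wg 0"
  and act_mult: "x \<in> W \<Longrightarrow> y \<in> W \<Longrightarrow> actW h (multW x y) = multW (actW h x) (actW h y)"
  and act_one: "actW h oneW = oneW"
  using yd_algebra unfolding yd_algebra_def by simp_all

lemma scale_in: "x \<in> W \<Longrightarrow> sW c x \<in> W"
  and scale_scale: "x \<in> W \<Longrightarrow> sW a (sW b x) = sW (a * b) x"
  and scale_one: "x \<in> W \<Longrightarrow> sW 1 x = x"
  and scale_add_left: "x \<in> W \<Longrightarrow> sW (a + b) x = sW a x + sW b x"
  by (simp_all add: module_onD[OF module])

lemma diff_in: "x \<in> W \<Longrightarrow> y \<in> W \<Longrightarrow> x - y \<in> W"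
  by (rule module_diff[OF module])

lemma scale_zero: "x \<in> W \<Longrightarrow> sW 0 x = 0"
  by (rule module_scale_zero_left[OF module])

lemma mult_diff_left: "x \<in> W \<Longrightarrow> y \<in> W \<Longrightarrow> z \<in> W \<Longrightarrow> multW (x - y) z = multW x z - multW y z"
  using mult_add_left[of "x - y" y z] diff_in by (simp add: eq_diff_eq)

lemma mult_diff_right: "x \<in> W \<Longrightarrow> y \<in> W \<Longrightarrow> z \<in> W \<Longrightarrow> multW z (x - y) = multW z x - multW z y"
  using mult_add_right[of "x - y" y z] diff_in by (simp add: eq_diff_eq)

lemma mult_sum_left:
  "(\<And>i. i \<in> S \<Longrightarrow> F i \<in> W) \<Longrightarrow> y \<in> W \<Longrightarrow> multW (\<Sum>i\<in>S. F i) y = (\<Sum>i\<in>S. multW (F i) y)"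
  using lin_sum[of W sW W sW "\<lambda>x. multW x y" S F] module
  by (simp add: lin_on_def mult_in mult_add_left mult_scale_left scale_in)

lemma mult_sum_right:
  "(\<And>i. i \<in> S \<Longrightarrow> F i \<in> W) \<Longrightarrow> y \<in> W \<Longrightarrow> multW y (\<Sum>i\<in>S. F i) = (\<Sum>i\<in>S. multW y (F i))"
  using lin_sum[of W sW W sW "multW y" S F] module
  by (simp add: lin_on_def mult_in mult_add_right mult_scale_right scale_in)

lemma grade_sum: "(\<And>i. i \<in> S \<Longrightarrow> F i \<in> Wg g) \<Longrightarrow> (\<Sum>i\<in>S. F i) \<in> Wg g"
  by (induct S rule: infinite_finite_induct) (simp_all add: grade_zero grade_add)

text \<open>The image of rule (ii) in W, with the bracket [x,y] mapped to xy - k yx.\<close>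

lemma mult_commutator_exchange:
  assumes "p \<in> W" "q \<in> W" "x \<in> W" "y \<in> W"
  shows "sW k (multW p (multW y (multW x q))) + multW (multW p (multW x y - sW k (multW y x))) q
       = multW p (multW x (multW y q))"
proof -
  have xy: "multW x y \<in> W" "multW y x \<in> W" using assms mult_in by auto
  have "multW (multW p (multW x y - sW k (multW y x))) q
      = multW (multW p (multW x y)) q - sW k (multW (multW p (multW y x)) q)"
    using assms xy by (simp add: mult_diff_left mult_diff_right mult_scale_left mult_scale_right
        mult_in scale_in)
  also have "\<dots> = multW p (multW x (multW y q)) - sW k (multW p (multW y (multW x q)))"
    using assms by (simp add: mult_assoc mult_in)
  finally show ?thesis by simp
qed

end

section \<open>The algebra U(L) on ordered words\<close>

locale pbw =
  fixes \<chi> :: "'g::group_add \<Rightarrow> 'g \<Rightarrow> 'k::field"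
    and sL :: "'k \<Rightarrow> 'l::ab_group_add \<Rightarrow> 'l" and Lg :: "'g \<Rightarrow> 'l set"
    and actL :: "'g \<Rightarrow> 'l \<Rightarrow> 'l" and br :: "'l \<Rightarrow> 'l \<Rightarrow> 'l"
    and A :: "'a::ab_group_add set" and sA :: "'k \<Rightarrow> 'a \<Rightarrow> 'a" and Ag :: "'g \<Rightarrow> 'a set"
    and actA :: "'g \<Rightarrow> 'a \<Rightarrow> 'a" and multA :: "'a \<Rightarrow> 'a \<Rightarrow> 'a" and oneA :: 'a
    and \<phi>A :: "'l \<Rightarrow> 'a"
    and E :: "'l set" and B :: "'b set" and \<phi> :: "'l \<Rightarrow> 'b"
    and \<phi>L :: "'l \<Rightarrow> ('b list \<Rightarrow> 'k)"
    and prec :: "'b \<Rightarrow> 'b \<Rightarrow> bool"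
    and lam :: "('b list \<Rightarrow> 'k) \<Rightarrow> ('b list \<Rightarrow> 'k)"
  assumes bichar: "bicharacter \<chi>"
    and mlie: "braided_mlie_witness \<chi> UNIV sL Lg actL br A sA Ag actA multA oneA \<phi>A"
    and braid: "braiding_by \<chi> UNIV sL Lg actL"
    and basis: "basis_on UNIV sL E"
    and homog: "\<forall>e\<in>E. \<exists>g. e \<in> Lg g"
    and bij: "bij_betw \<phi> E B"
    and phiL_lin: "lin_on UNIV sL (FBstar B) fscale \<phi>L"
    and phiL_E: "\<forall>e\<in>E. \<phi>L e = wdelta [\<phi> e]"
    and order: "strict_total_order_on B prec"
    and lam_lin: "lin_on (FBstar B) fscale (FP B prec) fscale lam"
    and lam_i: "\<forall>w\<in>Pwords B prec. lam (wdelta w) = wdelta w"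
    and lam_ii: "\<forall>u v. set u \<subseteq> B \<longrightarrow> set v \<subseteq> B \<longrightarrow> (\<forall>b\<in>B. \<forall>c\<in>B.
        lam (wdelta (u @ b # c # v)) =
          fscale (\<chi> (letter_deg Lg E \<phi> b) (letter_deg Lg E \<phi> c)) (lam (wdelta (u @ c # b # v)))
          + lam (conc (conc (wdelta u) (\<phi>L (br (inv_into E \<phi> b) (inv_into E \<phi> c)))) (wdelta v)))"
    and lam_iii: "\<forall>u\<in>FBstar B. \<forall>v\<in>FBstar B.
        lam (conc u v) = lam (conc (lam u) v) \<and> lam (conc u v) = lam (conc u (lam v))"
begin

abbreviation "d \<equiv> letter_deg Lg E \<phi>"
abbreviation "eb \<equiv> inv_into E \<phi>"

abbreviation U :: "('b list \<Rightarrow> 'k) set" where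
  "U \<equiv> FP B prec"
abbreviation Ug :: "'g \<Rightarrow> ('b list \<Rightarrow> 'k) set" where
  "Ug \<equiv> (\<lambda>g. FBstar_gr B (letter_deg Lg E \<phi>) g \<inter> FP B prec)"
abbreviation actU :: "'g \<Rightarrow> ('b list \<Rightarrow> 'k) \<Rightarrow> ('b list \<Rightarrow> 'k)" where
  "actU \<equiv> act_FBstar (\<lambda>g b. \<phi>L (actL g (inv_into E \<phi> b)))"
abbreviation multU :: "('b list \<Rightarrow> 'k) \<Rightarrow> ('b list \<Rightarrow> 'k) \<Rightarrow> ('b list \<Rightarrow> 'k)" where
  "multU \<equiv> (\<lambda>u v. lam (conc u v))"

lemma yd_module_L: "yd_module UNIV sL Lg actL"
  using mlie by (simp add: braided_mlie_witness_def)

sublocale L: graded_basis sL Lg E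
  using yd_module_L basis homog by unfold_locales (simp_all add: yd_module_def)

lemma br_add_left: "br (x + y) z = br x z + br y z"
  and br_add_right: "br x (y + z) = br x y + br x z"
  and br_scale_left: "br (sL c x) y = sL c (br x y)"
  and br_scale_right: "br x (sL c y) = sL c (br x y)"
  and br_grade: "x \<in> Lg g \<Longrightarrow> y \<in> Lg h \<Longrightarrow> br x y \<in> Lg (g + h)"
  using mlie unfolding braided_mlie_witness_def by blast+

lemma actL_braiding: "x \<in> Lg g \<Longrightarrow> actL h x = sL (\<chi> h g) x"
  using braid unfolding braiding_by_def by blast

lemma actL_grade: "x \<in> Lg g \<Longrightarrow> actL h x \<in> Lg (h + g + - h)"
  using yd_module_L unfolding yd_module_def by blast

lemma actL_lin: "lin_on UNIV sL UNIV sL (actL h)"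
  using yd_module_L unfolding yd_module_def by blast

lemma eb_in_E: "b \<in> B \<Longrightarrow> eb b \<in> E"
  using bij by (metis bij_betw_def inv_into_into)

lemma phi_eb: "b \<in> B \<Longrightarrow> \<phi> (eb b) = b"
  using bij by (meson bij_betw_inv_into_right)

lemma eb_phi: "e \<in> E \<Longrightarrow> eb (\<phi> e) = e"
  using bij by (metis bij_betw_def inv_into_f_f)

lemma phi_in_B: "e \<in> E \<Longrightarrow> \<phi> e \<in> B"
  using bij by (metis bij_betw_def imageI)

lemma letter_deg_eq: "d b = L.deg (eb b)"
  by (simp add: letter_deg_def L.deg_def)

lemma letter_deg_phi: "e \<in> E \<Longrightarrow> e \<in> Lg g \<Longrightarrow> d (\<phi> e) = g"
  by (simp add: letter_deg_eq eb_phi L.deg_eq)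

lemma eb_in_letter_deg: "b \<in> B \<Longrightarrow> eb b \<in> Lg (d b)"
  by (simp add: letter_deg_eq L.basis_in_deg eb_in_E)

text \<open>The braiding makes h act on a basis vector e of degree g by the nonzero scalar
  \<chi>(h,g), so e lies in both L_g and L_{hgh^{-1}}; hence g commutes with every h.\<close>

lemma basis_deg_central:
  assumes "e \<in> E" "e \<in> Lg g"
  shows "central g"
proof -
  have "g = h + g + - h" for h
  proof -
    have "sL (inverse (\<chi> h g)) (actL h e) \<in> Lg (h + g + - h)"
      using actL_grade[OF assms(2)] by (rule L.grade_scale)
    also have "sL (inverse (\<chi> h g)) (actL h e) = e"
      using actL_braiding[OF assms(2)] module_onD(7,8)[OF L.module] bicharacter_nonzero[OF bichar]
      by simp
    finally show ?thesis
      using L.grade_unique[OF assms(2)] L.basis_nonzero[OF assms(1)] by blast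
  qed
  then show ?thesis
    unfolding central_def by (metis add.assoc add_0_right add.left_inverse)
qed

lemma letter_deg_central: "b \<in> B \<Longrightarrow> central (d b)"
  using basis_deg_central eb_in_E eb_in_letter_deg by blast

lemma homogeneous_central:
  assumes "f \<in> FBstar B" "homogeneous d g f" "f \<noteq> 0"
  shows "central g"
proof -
  obtain w where "w \<in> supp f" using assms(3) by (auto simp: supp_def fun_eq_iff)
  then have "set w \<subseteq> B" "word_deg d w = g" using assms by (auto simp: FBstar_iff homogeneous_def)
  then show ?thesis using central_word_deg[of w d] letter_deg_central by blast
qed

lemma phiL_in: "\<phi>L x \<in> FBstar B"
  and phiL_add: "\<phi>L (x + y) = \<phi>L x + \<phi>L y"
  and phiL_scale: "\<phi>L (sL c x) = fscale c (\<phi>L x)"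
  using lin_onD[OF phiL_lin] by simp_all

lemma phiL_eb: "b \<in> B \<Longrightarrow> \<phi>L (eb b) = wdelta [b]"
  using phiL_E eb_in_E phi_eb by metis

lemma phiL_grade:
  assumes "x \<in> Lg g"
  shows "\<phi>L x \<in> FBstar B" "\<forall>w\<in>supp (\<phi>L x). length w = 1 \<and> word_deg d w = g"
proof -
  have "\<forall>w\<in>supp (\<phi>L x). length w = 1 \<and> word_deg d w = g"
  proof (rule L.grade_span_induct[OF _ _ _ _ assms])
    show "\<forall>w\<in>supp (\<phi>L 0). length w = 1 \<and> word_deg d w = g"
      by (simp add: lin_zero[OF phiL_lin L.module] supp_def)
    show "\<forall>w\<in>supp (\<phi>L (x + y)). length w = 1 \<and> word_deg d w = g"
      if "\<forall>w\<in>supp (\<phi>L x). length w = 1 \<and> word_deg d w = g"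
        "\<forall>w\<in>supp (\<phi>L y). length w = 1 \<and> word_deg d w = g" for x y
      using that supp_add[of "\<phi>L x" "\<phi>L y"] unfolding phiL_add by blast
    show "\<forall>w\<in>supp (\<phi>L (sL c x)). length w = 1 \<and> word_deg d w = g"
      if "\<forall>w\<in>supp (\<phi>L x). length w = 1 \<and> word_deg d w = g" for c x
      using that supp_fscale[of c "\<phi>L x"] unfolding phiL_scale by blast
    show "\<forall>w\<in>supp (\<phi>L e). length w = 1 \<and> word_deg d w = g" if "e \<in> E" "e \<in> Lg g" for e
      using that phiL_E letter_deg_phi by (simp add: supp_wdelta)
  qed
  then show "\<phi>L x \<in> FBstar B" "\<forall>w\<in>supp (\<phi>L x). length w = 1 \<and> word_deg d w = g"
    by (simp_all add: phiL_in)
qed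

lemma phiL_in_U: "\<phi>L x \<in> U"
proof (rule L.span_induct[where P="\<lambda>x. \<phi>L x \<in> U"])
  show "\<phi>L 0 \<in> U" by (simp add: lin_zero[OF phiL_lin L.module] FP_zero)
  show "\<phi>L e \<in> U" if "e \<in> E" for e
    using that phiL_E phi_in_B by (simp add: FP_wdelta Pwords_if_length_le_1)
qed (simp_all add: phiL_add phiL_scale FP_add FP_fscale)

lemma lam_in: "f \<in> FBstar B \<Longrightarrow> lam f \<in> U"
  and lam_add: "f \<in> FBstar B \<Longrightarrow> g \<in> FBstar B \<Longrightarrow> lam (f + g) = lam f + lam g"
  and lam_fscale: "f \<in> FBstar B \<Longrightarrow> lam (fscale c f) = fscale c (lam f)"
  using lin_onD[OF lam_lin] by simp_all

lemma lam_sum: "(\<And>i. i \<in> S \<Longrightarrow> F i \<in> FBstar B) \<Longrightarrow> lam (\<Sum>i\<in>S. F i) = (\<Sum>i\<in>S. lam (F i))"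
  by (rule lin_sum[OF lam_lin module_FBstar])

lemma lam_expansion:
  assumes "f \<in> FBstar B"
  shows "lam f = (\<Sum>w\<in>supp f. fscale (f w) (lam (wdelta w)))"
proof -
  have "set w \<subseteq> B" if "w \<in> supp f" for w using assms that by (auto simp: FBstar_iff)
  then show ?thesis
    by (subst FBstar_expansion[OF assms], subst lam_sum)
      (simp_all add: FBstar_fscale FBstar_wdelta lam_fscale)
qed

lemma lam_FP:
  assumes "f \<in> U"
  shows "lam f = f"
proof -
  have f: "f \<in> FBstar B" using assms FP_subset_FBstar by blast
  have "lam f = (\<Sum>w\<in>supp f. fscale (f w) (lam (wdelta w)))" by (rule lam_expansion[OF f])
  also have "\<dots> = (\<Sum>w\<in>supp f. fscale (f w) (wdelta w))"
    using assms lam_i by (intro sum.cong refl) (auto simp: FP_iff)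
  finally show ?thesis using FBstar_expansion[OF f] by simp
qed

lemma lam_rule_ii:
  assumes "set u \<subseteq> B" "set v \<subseteq> B" "b \<in> B" "c \<in> B"
  shows "lam (wdelta (u @ b # c # v)) =
          fscale (\<chi> (d b) (d c)) (lam (wdelta (u @ c # b # v)))
          + lam (conc (conc (wdelta u) (\<phi>L (br (eb b) (eb c)))) (wdelta v))"
  using lam_ii assms by blast

lemma conc_middle:
  assumes "f \<in> FBstar B"
  shows "conc (conc (wdelta u) f) (wdelta v) = (\<Sum>w\<in>supp f. fscale (f w) (wdelta (u @ w @ v)))"
  by (subst FBstar_expansion[OF assms])
    (simp add: conc_sum_left conc_sum_right conc_fscale_left conc_fscale_right conc_wdelta)

lemma bracket_term:
  assumes "set u \<subseteq> B" "set v \<subseteq> B" "b \<in> B" "c \<in> B"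
  defines "F \<equiv> conc (conc (wdelta u) (\<phi>L (br (eb b) (eb c)))) (wdelta v)"
  shows "F \<in> FBstar B"
    and "\<And>w. w \<in> supp F \<Longrightarrow> set w \<subseteq> B \<and> length w = Suc (length u + length v)
                             \<and> word_deg d w = word_deg d (u @ b # c # v)"
proof -
  have grade: "br (eb b) (eb c) \<in> Lg (d b + d c)"
    using assms(3,4) by (intro br_grade eb_in_letter_deg)
  show "F \<in> FBstar B"
    unfolding F_def using assms(1,2) by (intro FBstar_conc FBstar_wdelta phiL_in)
  fix w assume "w \<in> supp F"
  then obtain w0 where "w0 \<in> supp (\<phi>L (br (eb b) (eb c)))" "w = u @ w0 @ v"
    unfolding F_def conc_middle[OF phiL_in] using supp_sum_wdelta[where h = "\<lambda>w. u @ w @ v"] by blast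
  moreover from this(1) have "set w0 \<subseteq> B" "length w0 = 1" "word_deg d w0 = d b + d c"
    using phiL_grade[OF grade] by (auto simp: FBstar_iff)
  ultimately show "set w \<subseteq> B \<and> length w = Suc (length u + length v) \<and> word_deg d w = word_deg d (u @ b # c # v)"
    using assms(1,2) by (simp add: add.assoc)
qed

lemma lam_homogeneous_word:
  assumes "set w \<subseteq> B"
  shows "homogeneous d (word_deg d w) (lam (wdelta w))"
  using order _ _ assms
proof (rule Pwords_rewrite_induct)
  fix w assume "w \<in> Pwords B prec"
  then show "homogeneous d (word_deg d w) (lam (wdelta w))"
    using lam_i homogeneous_wdelta by metis
next
  fix u b c v
  assume B: "set u \<subseteq> B" "set v \<subseteq> B" "b \<in> B" "c \<in> B"
    and swapped: "homogeneous d (word_deg d (u @ c # b # v)) (lam (wdelta (u @ c # b # v)))"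
    and shorter: "\<And>w'. set w' \<subseteq> B \<Longrightarrow> length w' < Suc (Suc (length u + length v)) \<Longrightarrow>
              homogeneous d (word_deg d w') (lam (wdelta w'))"
  let ?F = "conc (conc (wdelta u) (\<phi>L (br (eb b) (eb c)))) (wdelta v)"
  have "d c + d b = d b + d c"
    using letter_deg_central[OF B(3)] unfolding central_def by simp
  then have "word_deg d (u @ c # b # v) = word_deg d (u @ b # c # v)"
    by (simp add: add.assoc[symmetric])
  moreover have "homogeneous d (word_deg d (u @ b # c # v)) (lam ?F)"
    unfolding lam_expansion[OF bracket_term(1)[OF B]]
    using bracket_term(2)[OF B] shorter by (intro homogeneous_sum homogeneous_fscale) fastforce
  ultimately show "homogeneous d (word_deg d (u @ b # c # v)) (lam (wdelta (u @ b # c # v)))"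
    unfolding lam_rule_ii[OF B] using swapped by (intro homogeneous_add homogeneous_fscale) simp_all
qed

lemma lam_homogeneous:
  assumes "f \<in> FBstar B" "homogeneous d g f"
  shows "homogeneous d g (lam f)"
  unfolding lam_expansion[OF assms(1)]
  using assms lam_homogeneous_word
  by (intro homogeneous_sum homogeneous_fscale) (auto simp: FBstar_iff homogeneous_def)

lemma lam_char_scale:
  assumes "f \<in> FBstar B"
  shows "lam (char_scale \<chi> d h f) = char_scale \<chi> d h (lam f)"
proof -
  have words: "set w \<subseteq> B" if "w \<in> supp f" for w using assms that by (auto simp: FBstar_iff)
  have "lam (char_scale \<chi> d h f)
      = lam (\<Sum>w\<in>supp f. fscale (f w * \<chi> h (word_deg d w)) (wdelta w))"
    by (subst FBstar_expansion[OF assms])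
      (simp add: char_scale_sum char_scale_fscale char_scale_wdelta fscale_fscale)
  also have "\<dots> = (\<Sum>w\<in>supp f. fscale (f w) (fscale (\<chi> h (word_deg d w)) (lam (wdelta w))))"
    using words by (subst lam_sum) (auto intro!: sum.cong simp: lam_fscale FBstar_fscale FBstar_wdelta
        fscale_fscale simp del: fscale_apply)
  also have "\<dots> = char_scale \<chi> d h (lam f)"
    unfolding lam_expansion[OF assms] char_scale_sum char_scale_fscale
    using words by (intro sum.cong refl) (simp add: char_scale_homogeneous[OF lam_homogeneous_word])
  finally show ?thesis .
qed

lemma actU_char_scale:
  assumes "f \<in> FBstar B"
  shows "actU h f = char_scale \<chi> d h f"
proof (rule act_FBstar_char_scale[OF bichar _ assms], intro ballI)
  fix b assume "b \<in> B"
  then show "\<phi>L (actL h (eb b)) = fscale (\<chi> h (d b)) (wdelta [b])"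
    by (simp add: actL_braiding[OF eb_in_letter_deg] phiL_scale phiL_eb)
qed

lemma actU_zero: "actU h 0 = 0"
  by (simp add: act_FBstar_def)

lemma U_subset_FBstar: "f \<in> U \<Longrightarrow> f \<in> FBstar B"
  using FP_subset_FBstar by blast

lemma one_in_U: "wdelta [] \<in> U"
  by (rule FP_wdelta) (simp add: Pwords_def)

lemma multU_in: "f \<in> U \<Longrightarrow> f' \<in> U \<Longrightarrow> multU f f' \<in> U"
  by (intro lam_in FBstar_conc U_subset_FBstar)

lemma Ug_iff: "f \<in> Ug g \<longleftrightarrow> f \<in> U \<and> homogeneous d g f"
  using FP_subset_FBstar FBstar_gr_iff by blast

lemma multU_assoc:
  assumes "x \<in> U" "y \<in> U" "z \<in> U"
  shows "multU (multU x y) z = multU x (multU y z)"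
proof -
  have xyz: "x \<in> FBstar B" "y \<in> FBstar B" "z \<in> FBstar B"
    using assms U_subset_FBstar by auto
  have "lam (conc (lam (conc x y)) z) = lam (conc (conc x y) z)"
    using lam_iii FBstar_conc[OF xyz(1,2)] xyz(3) by metis
  also have "\<dots> = lam (conc x (conc y z))" by (simp add: conc_assoc)
  also have "\<dots> = lam (conc x (lam (conc y z)))"
    using lam_iii FBstar_conc[OF xyz(2,3)] xyz(1) by metis
  finally show ?thesis .
qed

lemma multU_grade: "x \<in> Ug g \<Longrightarrow> y \<in> Ug h \<Longrightarrow> multU x y \<in> Ug (g + h)"
  unfolding Ug_iff
  using lam_homogeneous[OF FBstar_conc[OF U_subset_FBstar U_subset_FBstar] homogeneous_conc]
  by (auto intro: multU_in)

lemma actU_in: "x \<in> U \<Longrightarrow> actU h x \<in> U"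
  by (simp add: actU_char_scale U_subset_FBstar FP_iff supp_char_scale[OF bichar])

lemma actU_grade:
  assumes "x \<in> Ug g"
  shows "actU h x \<in> Ug (h + g + - h)"
proof (cases "x = 0")
  case True
  then show ?thesis
    by (simp add: actU_zero FBstar_gr_iff FBstar_zero FP_zero homogeneous_zero)
next
  case False
  have x: "x \<in> U" "homogeneous d g x" using assms Ug_iff by blast+
  then have "h + g + - h = g"
    using homogeneous_central[OF U_subset_FBstar[OF x(1)] x(2) False] central_conj by blast
  moreover have "homogeneous d g (actU h x)"
    using x by (simp add: actU_char_scale U_subset_FBstar homogeneous_def supp_char_scale[OF bichar])
  ultimately show ?thesis
    using actU_in[OF x(1)] by (simp add: FBstar_gr_iff U_subset_FBstar)
qed

lemma actU_multU:
  assumes "x \<in> U" "y \<in> U"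
  shows "actU h (multU x y) = multU (actU h x) (actU h y)"
proof -
  have xy: "x \<in> FBstar B" "y \<in> FBstar B" using assms U_subset_FBstar by auto
  have "actU h (multU x y) = char_scale \<chi> d h (lam (conc x y))"
    using actU_char_scale U_subset_FBstar multU_in assms by blast
  also have "\<dots> = lam (char_scale \<chi> d h (conc x y))"
    using lam_char_scale FBstar_conc[OF xy] by metis
  finally show ?thesis
    by (simp add: actU_char_scale xy conc_char_scale[OF bichar])
qed

lemma yd_algebra_U: "yd_algebra U fscale Ug actU multU (wdelta [])"
  unfolding yd_algebra_def yd_module_def
proof (intro conjI allI ballI)
  show "lin_on U fscale U fscale (actU g)" for g
    unfolding lin_on_def
    using actU_in by (simp add: actU_char_scale U_subset_FBstar char_scale_add char_scale_fscale
        FP_add FP_fscale del: fscale_apply)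
  show "multU x y \<in> Ug (g + h)" if "x \<in> Ug g" "y \<in> Ug h" for g h x y
    using that by (rule multU_grade)
  show "actU h x \<in> Ug (h + g + - h)" if "x \<in> Ug g" for h g x
    using that by (rule actU_grade)
  show "multU (multU x y) z = multU x (multU y z)" if "x \<in> U" "y \<in> U" "z \<in> U" for x y z
    using that by (rule multU_assoc)
  show "actU h (multU x y) = multU (actU h x) (actU h y)" if "x \<in> U" "y \<in> U" for h x y
    using that by (rule actU_multU)
  show "actU (g + h) x = actU g (actU h x)" if "x \<in> U" for g h x
    using that actU_in[OF that] by (simp add: actU_char_scale U_subset_FBstar char_scale_plus[OF bichar])
  show "actU h (wdelta []) = wdelta []" for h
    using actU_char_scale[OF FBstar_wdelta[of "[]" B]]
    by (simp add: char_scale_wdelta bicharacter_zero_right[OF bichar])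
  show "wdelta [] \<in> Ug 0"
    using one_in_U by (simp add: FBstar_gr_iff U_subset_FBstar homogeneous_wdelta[of d "[]", simplified])
qed (simp_all add: module_FP graded_FP one_in_U multU_in lam_FP U_subset_FBstar
      actU_in actU_char_scale char_scale_zero_left[OF bichar] char_scale_plus[OF bichar]
      conc_add_left conc_add_right conc_fscale_left conc_fscale_right lam_add lam_fscale FBstar_conc
      del: fscale_apply)

text \<open>Not a simp rule: actU is itself built from phiL \<circ> actL, so rewriting with it does not terminate.\<close>

lemma phiL_equivariant: "\<phi>L (actL h x) = actU h (\<phi>L x)"
proof (rule L.span_induct[where P="\<lambda>x. \<phi>L (actL h x) = actU h (\<phi>L x)"])
  show "\<phi>L (actL h 0) = actU h (\<phi>L 0)"
    by (simp add: lin_zero[OF actL_lin L.module] lin_zero[OF phiL_lin L.module] actU_zero)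
  show "\<phi>L (actL h e) = actU h (\<phi>L e)" if "e \<in> E" for e
    using that actL_braiding[OF L.basis_in_deg[OF that]] letter_deg_phi[OF that L.basis_in_deg[OF that]]
    by (simp add: phiL_scale phiL_E actU_char_scale FBstar_wdelta phi_in_B char_scale_wdelta del: fscale_apply)
qed (simp_all add: lin_onD(2,3)[OF actL_lin] phiL_add phiL_scale actU_char_scale phiL_in FBstar_add
      FBstar_fscale char_scale_add char_scale_fscale del: fscale_apply)

lemma phiL_in_grade: "x \<in> Lg g \<Longrightarrow> \<phi>L x \<in> Ug g"
  using phiL_grade phiL_in_U by (auto simp: FBstar_gr_iff homogeneous_def)

lemma multU_add_left: "f \<in> FBstar B \<Longrightarrow> f' \<in> FBstar B \<Longrightarrow> g \<in> FBstar B \<Longrightarrow>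
    multU (f + f') g = multU f g + multU f' g"
  and multU_add_right: "f \<in> FBstar B \<Longrightarrow> f' \<in> FBstar B \<Longrightarrow> g \<in> FBstar B \<Longrightarrow>
    multU g (f + f') = multU g f + multU g f'"
  and multU_fscale_left: "f \<in> FBstar B \<Longrightarrow> g \<in> FBstar B \<Longrightarrow> multU (fscale c f) g = fscale c (multU f g)"
  and multU_fscale_right: "f \<in> FBstar B \<Longrightarrow> g \<in> FBstar B \<Longrightarrow> multU g (fscale c f) = fscale c (multU g f)"
  by (simp_all add: conc_add_left conc_add_right conc_fscale_left conc_fscale_right lam_add lam_fscale
      FBstar_conc del: fscale_apply)

lemma phiL_bracket_basis:
  assumes "e \<in> E" "e \<in> Lg g" "f \<in> E" "f \<in> Lg h"
  shows "\<phi>L (br e f) = multU (\<phi>L e) (\<phi>L f) - fscale (\<chi> g h) (multU (\<phi>L f) (\<phi>L e))"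
proof -
  have letters: "\<phi> e \<in> B" "\<phi> f \<in> B" "d (\<phi> e) = g" "d (\<phi> f) = h"
    using assms by (simp_all add: phi_in_B letter_deg_phi)
  have "lam (wdelta [\<phi> e, \<phi> f])
      = fscale (\<chi> g h) (lam (wdelta [\<phi> f, \<phi> e])) + lam (\<phi>L (br e f))"
    using lam_rule_ii[of "[]" "[]", OF _ _ letters(1,2)] letters(3,4) assms(1,3) by (simp add: eb_phi)
  moreover have "multU (\<phi>L e) (\<phi>L f) = lam (wdelta [\<phi> e, \<phi> f])"
    "multU (\<phi>L f) (\<phi>L e) = lam (wdelta [\<phi> f, \<phi> e])"
    using assms phiL_E by (simp_all add: conc_wdelta)
  ultimately show ?thesis
    by (simp add: lam_FP[OF phiL_in_U])
qed

lemma lie_hom_phiL: "lie_hom_minus \<chi> UNIV sL Lg actL br U fscale Ug actU multU \<phi>L"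
  unfolding lie_hom_minus_def yd_morphism_def
proof (intro conjI allI ballI)
  show "lin_on UNIV sL U fscale \<phi>L"
    unfolding lin_on_def by (simp add: phiL_in_U phiL_add phiL_scale)
  fix g h x y assume xy: "x \<in> Lg g" "y \<in> Lg h"
  define G where "G x y = multU (\<phi>L x) (\<phi>L y) - fscale (\<chi> g h) (multU (\<phi>L y) (\<phi>L x))" for x y
  have "\<phi>L (br x y) = G x y"
  proof (rule L.bilinear_eq_on_homogeneous[where F = "\<lambda>x y. \<phi>L (br x y)" and G = G and t = fscale,
        OF _ _ _ _ _ _ _ _ _ xy])
    show "\<phi>L (br e f) = G e f" if "e \<in> E" "e \<in> Lg g" "f \<in> E" "f \<in> Lg h" for e f
      using phiL_bracket_basis[OF that] by (simp add: G_def)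
    show "G (sL c x) y = fscale c (G x y)" "G y (sL c x) = fscale c (G y x)" for c x y
      by (simp_all add: G_def phiL_scale multU_fscale_left multU_fscale_right phiL_in fscale_diff
          fscale_fscale mult.commute del: fscale_apply)
  qed (simp_all add: G_def br_add_left br_add_right br_scale_left br_scale_right phiL_add phiL_scale
      multU_add_left multU_add_right phiL_in fscale_add_right del: fscale_apply)
  then show "\<phi>L (br x y) = multU (\<phi>L x) (\<phi>L y) - fscale (\<chi> g h) (multU (\<phi>L y) (\<phi>L x))"
    by (simp add: G_def)
qed (rule phiL_in_grade phiL_equivariant | assumption)+

end

section \<open>The universal property\<close>

locale pbw_univ = pbw \<chi> sL Lg actL br A sA Ag actA multA oneA \<phi>A E B \<phi> \<phi>L prec lam
  + W: yd_alg W sW Wg actW multW oneW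
  for \<chi> :: "'g::group_add \<Rightarrow> 'g \<Rightarrow> 'k::field"
    and sL :: "'k \<Rightarrow> 'l::ab_group_add \<Rightarrow> 'l" and Lg :: "'g \<Rightarrow> 'l set"
    and actL :: "'g \<Rightarrow> 'l \<Rightarrow> 'l" and br :: "'l \<Rightarrow> 'l \<Rightarrow> 'l"
    and A :: "'a::ab_group_add set" and sA :: "'k \<Rightarrow> 'a \<Rightarrow> 'a" and Ag :: "'g \<Rightarrow> 'a set"
    and actA :: "'g \<Rightarrow> 'a \<Rightarrow> 'a" and multA :: "'a \<Rightarrow> 'a \<Rightarrow> 'a" and oneA :: 'a
    and \<phi>A :: "'l \<Rightarrow> 'a"
    and E :: "'l set" and B :: "'b set" and \<phi> :: "'l \<Rightarrow> 'b"
    and \<phi>L :: "'l \<Rightarrow> ('b list \<Rightarrow> 'k)"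
    and prec :: "'b \<Rightarrow> 'b \<Rightarrow> bool"
    and lam :: "('b list \<Rightarrow> 'k) \<Rightarrow> ('b list \<Rightarrow> 'k)"
    and W :: "'w::ab_group_add set" and sW :: "'k \<Rightarrow> 'w \<Rightarrow> 'w" and Wg :: "'g \<Rightarrow> 'w set"
    and actW :: "'g \<Rightarrow> 'w \<Rightarrow> 'w" and multW :: "'w \<Rightarrow> 'w \<Rightarrow> 'w" and oneW :: 'w +
  fixes \<psi> :: "'l \<Rightarrow> 'w"
  assumes psi_lie_hom: "lie_hom_minus \<chi> UNIV sL Lg actL br W sW Wg actW multW \<psi>"
begin

lemma psi_lin: "lin_on UNIV sL W sW \<psi>"
  and psi_grade: "x \<in> Lg g \<Longrightarrow> \<psi> x \<in> Wg g"
  and psi_equivariant: "\<psi> (actL g x) = actW g (\<psi> x)"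
  and psi_bracket: "x \<in> Lg g \<Longrightarrow> y \<in> Lg h \<Longrightarrow>
    \<psi> (br x y) = multW (\<psi> x) (\<psi> y) - sW (\<chi> g h) (multW (\<psi> y) (\<psi> x))"
  using psi_lie_hom unfolding lie_hom_minus_def yd_morphism_def by simp_all

lemma psi_in: "\<psi> x \<in> W"
  and psi_add: "\<psi> (x + y) = \<psi> x + \<psi> y"
  and psi_scale: "\<psi> (sL c x) = sW c (\<psi> x)"
  using lin_onD[OF psi_lin] by simp_all

definition psi_word :: "'b list \<Rightarrow> 'w" where
  "psi_word w = foldr (\<lambda>b p. multW (\<psi> (eb b)) p) w oneW"

lemma psi_word_Nil [simp]: "psi_word [] = oneW"
  and psi_word_Cons [simp]: "psi_word (b # w) = multW (\<psi> (eb b)) (psi_word w)"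
  by (simp_all add: psi_word_def)

lemma psi_word_in: "psi_word w \<in> W"
  by (induct w) (simp_all add: W.one_in W.mult_in psi_in)

lemma psi_word_append: "psi_word (u @ v) = multW (psi_word u) (psi_word v)"
  by (induct u) (simp_all add: W.mult_one_left W.mult_assoc psi_word_in psi_in)

lemma psi_word_grade: "set w \<subseteq> B \<Longrightarrow> psi_word w \<in> Wg (word_deg d w)"
  by (induct w) (simp_all add: W.one_grade W.mult_grade psi_grade eb_in_letter_deg)

lemma actW_psi_word:
  assumes "set w \<subseteq> B"
  shows "actW h (psi_word w) = sW (\<chi> h (word_deg d w)) (psi_word w)"
  using assms
proof (induct w)
  case (Cons b w)
  then have "actW h (\<psi> (eb b)) = sW (\<chi> h (d b)) (\<psi> (eb b))"
    using psi_equivariant[of h "eb b"] actL_braiding[OF eb_in_letter_deg] psi_scale by simp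
  with Cons show ?case
    by (simp add: W.act_mult W.mult_scale_left W.mult_scale_right W.scale_scale W.scale_in
        W.mult_in psi_in psi_word_in bicharacter_add_right[OF bichar] mult.commute)
qed (simp add: W.act_one W.scale_one W.one_in bicharacter_zero_right[OF bichar])

definition psi_ext :: "('b list \<Rightarrow> 'k) \<Rightarrow> 'w" where
  "psi_ext f = (\<Sum>w\<in>supp f. sW (f w) (psi_word w))"

lemma psi_ext_superset:
  assumes "finite S" "supp f \<subseteq> S"
  shows "psi_ext f = (\<Sum>w\<in>S. sW (f w) (psi_word w))"
  unfolding psi_ext_def
  by (rule sum.mono_neutral_left) (use assms in \<open>auto simp: supp_def W.scale_zero psi_word_in\<close>)

lemma psi_ext_in: "psi_ext f \<in> W"
  unfolding psi_ext_def by (rule module_sum[OF W.module]) (simp add: W.scale_in psi_word_in)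

lemma psi_ext_lin: "lin_on (FBstar B) fscale W sW psi_ext"
  unfolding lin_on_def
proof (intro conjI ballI allI)
  fix f g :: "'b list \<Rightarrow> 'k" assume fg: "f \<in> FBstar B" "g \<in> FBstar B"
  let ?S = "supp f \<union> supp g"
  have "finite ?S" using fg by (simp add: FBstar_iff)
  then show "psi_ext (f + g) = psi_ext f + psi_ext g"
    using supp_add[of f g]
    by (simp add: psi_ext_superset[of ?S] sum.distrib W.scale_add_left psi_word_in)
next
  fix c and f :: "'b list \<Rightarrow> 'k" assume f: "f \<in> FBstar B"
  then have "psi_ext (fscale c f) = (\<Sum>w\<in>supp f. sW (c * f w) (psi_word w))"
    using f psi_ext_superset[of "supp f" "fscale c f", OF _ supp_fscale] by (simp add: FBstar_iff)
  also have "\<dots> = sW c (psi_ext f)"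
    unfolding psi_ext_def
    by (simp add: module_scale_sum[OF W.module] W.scale_in W.scale_scale psi_word_in)
  finally show "psi_ext (fscale c f) = sW c (psi_ext f)" .
qed (rule psi_ext_in)

lemma psi_ext_add: "f \<in> FBstar B \<Longrightarrow> g \<in> FBstar B \<Longrightarrow> psi_ext (f + g) = psi_ext f + psi_ext g"
  and psi_ext_fscale: "f \<in> FBstar B \<Longrightarrow> psi_ext (fscale c f) = sW c (psi_ext f)"
  using lin_onD[OF psi_ext_lin] by simp_all

lemma psi_ext_sum: "(\<And>i. i \<in> S \<Longrightarrow> F i \<in> FBstar B) \<Longrightarrow> psi_ext (\<Sum>i\<in>S. F i) = (\<Sum>i\<in>S. psi_ext (F i))"
  by (rule lin_sum[OF psi_ext_lin module_FBstar])

lemma psi_ext_wdelta: "psi_ext (wdelta w) = psi_word w"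
  by (simp add: psi_ext_def supp_wdelta wdelta_apply W.scale_one psi_word_in)

lemma psi_ext_phiL: "psi_ext (\<phi>L x) = \<psi> x"
proof (rule L.span_induct[where P="\<lambda>x. psi_ext (\<phi>L x) = \<psi> x"])
  show "psi_ext (\<phi>L 0) = \<psi> 0"
    by (simp add: lin_zero[OF phiL_lin L.module] lin_zero[OF psi_lin L.module] psi_ext_def supp_def)
  show "psi_ext (\<phi>L e) = \<psi> e" if "e \<in> E" for e
    using that by (simp add: phiL_E psi_ext_wdelta eb_phi W.mult_one_right psi_in)
qed (simp_all add: phiL_add psi_ext_add phiL_in psi_add phiL_scale psi_ext_fscale psi_scale
      del: fscale_apply)

lemma psi_ext_conc_wdelta:
  assumes "set u \<subseteq> B" "g \<in> FBstar B"
  shows "psi_ext (conc (wdelta u) g) = multW (psi_word u) (psi_ext g)"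
proof -
  have words: "set (u @ v) \<subseteq> B" if "v \<in> supp g" for v
    using assms that by (auto simp: FBstar_iff)
  have "psi_ext (conc (wdelta u) g) = psi_ext (\<Sum>v\<in>supp g. fscale (g v) (wdelta (u @ v)))"
    by (subst FBstar_expansion[OF assms(2)])
      (simp add: conc_sum_right conc_fscale_right conc_wdelta del: fscale_apply)
  also have "\<dots> = (\<Sum>v\<in>supp g. sW (g v) (psi_word (u @ v)))"
    using words by (simp add: psi_ext_sum psi_ext_fscale FBstar_fscale FBstar_wdelta psi_ext_wdelta
        del: fscale_apply)
  also have "\<dots> = multW (psi_word u) (psi_ext g)"
    unfolding psi_ext_def
    by (simp add: W.mult_sum_right W.mult_scale_right psi_word_append psi_word_in W.scale_in)
  finally show ?thesis .
qed

lemma psi_ext_conc: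
  assumes "f \<in> FBstar B" "g \<in> FBstar B"
  shows "psi_ext (conc f g) = multW (psi_ext f) (psi_ext g)"
proof -
  have words: "set u \<subseteq> B" if "u \<in> supp f" for u
    using assms that by (auto simp: FBstar_iff)
  have "psi_ext (conc f g) = psi_ext (\<Sum>u\<in>supp f. fscale (f u) (conc (wdelta u) g))"
    by (subst FBstar_expansion[OF assms(1)]) (simp add: conc_sum_left conc_fscale_left del: fscale_apply)
  also have "\<dots> = (\<Sum>u\<in>supp f. sW (f u) (multW (psi_word u) (psi_ext g)))"
    using words assms(2)
    by (simp add: psi_ext_sum psi_ext_fscale FBstar_fscale FBstar_conc FBstar_wdelta
        psi_ext_conc_wdelta del: fscale_apply)
  also have "\<dots> = multW (psi_ext f) (psi_ext g)"
    unfolding psi_ext_def[of f]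
    by (simp add: W.mult_sum_left W.mult_scale_left psi_word_in psi_ext_in W.scale_in)
  finally show ?thesis .
qed

lemma psi_ext_lam_if_words:
  assumes "f \<in> FBstar B" "\<And>w. w \<in> supp f \<Longrightarrow> psi_ext (lam (wdelta w)) = psi_word w"
  shows "psi_ext (lam f) = psi_ext f"
proof -
  have words: "set w \<subseteq> B" if "w \<in> supp f" for w using assms(1) that by (auto simp: FBstar_iff)
  have "psi_ext (lam f) = (\<Sum>w\<in>supp f. sW (f w) (psi_ext (lam (wdelta w))))"
    unfolding lam_expansion[OF assms(1)] using words
    by (simp add: psi_ext_sum psi_ext_fscale FBstar_fscale U_subset_FBstar lam_in FBstar_wdelta
        del: fscale_apply)
  then show ?thesis
    using assms(2) by (simp add: psi_ext_def)
qed

lemma psi_ext_lam_word: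
  assumes "set w \<subseteq> B"
  shows "psi_ext (lam (wdelta w)) = psi_word w"
  using order _ _ assms
proof (rule Pwords_rewrite_induct)
  fix w assume "w \<in> Pwords B prec"
  then show "psi_ext (lam (wdelta w)) = psi_word w" using lam_i psi_ext_wdelta by metis
next
  fix u b c v
  assume B: "set u \<subseteq> B" "set v \<subseteq> B" "b \<in> B" "c \<in> B"
    and swapped: "psi_ext (lam (wdelta (u @ c # b # v))) = psi_word (u @ c # b # v)"
    and shorter: "\<And>w'. set w' \<subseteq> B \<Longrightarrow> length w' < Suc (Suc (length u + length v)) \<Longrightarrow>
              psi_ext (lam (wdelta w')) = psi_word w'"
  let ?F = "conc (conc (wdelta u) (\<phi>L (br (eb b) (eb c)))) (wdelta v)"
  let ?k = "\<chi> (d b) (d c)"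
  let ?x = "\<psi> (eb b)" and ?y = "\<psi> (eb c)"
  have "psi_ext (lam ?F) = psi_ext ?F"
    using bracket_term[OF B] shorter by (intro psi_ext_lam_if_words) auto
  also have "\<dots> = multW (multW (psi_word u) (multW ?x ?y - sW ?k (multW ?y ?x))) (psi_word v)"
    using B by (simp add: psi_ext_conc FBstar_conc FBstar_wdelta phiL_in psi_ext_wdelta
        psi_ext_phiL psi_bracket[OF eb_in_letter_deg eb_in_letter_deg])
  finally have bracket: "psi_ext (lam ?F) = \<dots>" .
  have "psi_ext (lam (wdelta (u @ b # c # v))) = sW ?k (psi_ext (lam (wdelta (u @ c # b # v)))) + psi_ext (lam ?F)"
    unfolding lam_rule_ii[OF B] using B
    by (simp add: psi_ext_add psi_ext_fscale FBstar_fscale U_subset_FBstar lam_in FBstar_wdelta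
        bracket_term(1) del: fscale_apply)
  also have "\<dots> = multW (psi_word u) (multW ?x (multW ?y (psi_word v)))"
    unfolding swapped bracket
    by (simp add: psi_word_append W.mult_commutator_exchange psi_word_in psi_in)
  finally show "psi_ext (lam (wdelta (u @ b # c # v))) = psi_word (u @ b # c # v)"
    by (simp add: psi_word_append)
qed

lemma psi_ext_lam: "f \<in> FBstar B \<Longrightarrow> psi_ext (lam f) = psi_ext f"
  by (rule psi_ext_lam_if_words) (auto simp: FBstar_iff psi_ext_lam_word)

lemma yd_algebra_hom_psi_ext:
  "yd_algebra_hom U fscale Ug actU multU (wdelta []) W sW Wg actW multW oneW psi_ext"
  unfolding yd_algebra_hom_def yd_morphism_def
proof (intro conjI allI ballI)
  show "lin_on U fscale W sW psi_ext"
    using psi_ext_lin U_subset_FBstar by (simp add: lin_on_def)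
  show "psi_ext x \<in> Wg g" if "x \<in> Ug g" for g x
    using that psi_word_grade unfolding psi_ext_def
    by (intro W.grade_sum W.grade_scale) (auto simp: FBstar_gr_iff FBstar_iff homogeneous_def)
  show "psi_ext (actU g x) = actW g (psi_ext x)" if "x \<in> U" for g x
  proof -
    have words: "set w \<subseteq> B" if "w \<in> supp x" for w
      using \<open>x \<in> U\<close> that U_subset_FBstar by (auto simp: FBstar_iff)
    have "psi_ext (actU g x) = (\<Sum>w\<in>supp x. sW (char_scale \<chi> d g x w) (psi_word w))"
      using that by (simp add: actU_char_scale U_subset_FBstar psi_ext_def supp_char_scale[OF bichar])
    also have "\<dots> = (\<Sum>w\<in>supp x. actW g (sW (x w) (psi_word w)))"
      using words by (intro sum.cong refl)
        (simp add: char_scale_def lin_onD(3)[OF W.act_lin] actW_psi_word W.scale_scale psi_word_in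
          mult.commute)
    also have "\<dots> = actW g (psi_ext x)"
      unfolding psi_ext_def
      by (rule lin_sum[OF W.act_lin W.module, symmetric]) (simp add: W.scale_in psi_word_in)
    finally show ?thesis .
  qed
  show "psi_ext (multU x y) = multW (psi_ext x) (psi_ext y)" if "x \<in> U" "y \<in> U" for x y
    using that by (simp add: psi_ext_lam FBstar_conc U_subset_FBstar psi_ext_conc)
qed (simp add: psi_ext_wdelta)

lemma yd_algebra_hom_on_Pwords:
  assumes hom: "yd_algebra_hom U fscale Ug actU multU (wdelta []) W sW Wg actW multW oneW \<psi>'"
    and extends: "\<forall>x. \<psi>' (\<phi>L x) = \<psi> x"
    and "w \<in> Pwords B prec"
  shows "\<psi>' (wdelta w) = psi_word w"
  using assms(3)
proof (induct w)
  case Nil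
  then show ?case using hom by (simp add: yd_algebra_hom_def)
next
  case (Cons b w)
  have b: "b \<in> B" and w: "w \<in> Pwords B prec"
    using Pwords_ConsD[OF Cons(2)] by simp_all
  then have b': "[b] \<in> Pwords B prec"
    by (simp add: Pwords_if_length_le_1)
  have "\<psi>' (wdelta (b # w)) = \<psi>' (multU (wdelta [b]) (wdelta w))"
    using lam_i Cons(2) by (simp add: conc_wdelta)
  also have "\<dots> = multW (\<psi>' (wdelta [b])) (\<psi>' (wdelta w))"
    using hom b' w by (simp add: yd_algebra_hom_def FP_wdelta)
  also have "\<psi>' (wdelta [b]) = \<psi> (eb b)"
    using extends phiL_eb[OF b] by metis
  finally show ?case
    using Cons(1)[OF w] by simp
qed

lemma yd_algebra_hom_unique:
  assumes hom: "yd_algebra_hom U fscale Ug actU multU (wdelta []) W sW Wg actW multW oneW \<psi>'"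
    and extends: "\<forall>x. \<psi>' (\<phi>L x) = \<psi> x"
    and "u \<in> U"
  shows "\<psi>' u = psi_ext u"
proof -
  have lin: "lin_on U fscale W sW \<psi>'"
    using hom by (simp add: yd_algebra_hom_def yd_morphism_def)
  have words: "w \<in> Pwords B prec" if "w \<in> supp u" for w
    using \<open>u \<in> U\<close> that by (auto simp: FP_iff)
  have "\<psi>' u = \<psi>' (\<Sum>w\<in>supp u. fscale (u w) (wdelta w))"
    using FBstar_expansion[OF U_subset_FBstar[OF \<open>u \<in> U\<close>]] by (rule arg_cong)
  also have "\<dots> = (\<Sum>w\<in>supp u. \<psi>' (fscale (u w) (wdelta w)))"
    using words by (simp add: lin_sum[OF lin module_FP] FP_fscale FP_wdelta)
  also have "\<dots> = psi_ext u"
    using words unfolding psi_ext_def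
    by (intro sum.cong refl)
      (simp add: lin_onD(3)[OF lin] FP_wdelta yd_algebra_hom_on_Pwords[OF hom extends])
  finally show ?thesis .
qed

end

context pbw begin

lemma universal_property:
  assumes "yd_algebra W sW Wg actW multW oneW"
    and "lie_hom_minus \<chi> UNIV sL Lg actL br W sW Wg actW multW \<psi>"
  shows "\<exists>\<psi>b. yd_algebra_hom U fscale Ug actU multU (wdelta []) W sW Wg actW multW oneW \<psi>b
           \<and> (\<forall>x. \<psi>b (\<phi>L x) = \<psi> x)
           \<and> (\<forall>\<psi>'. yd_algebra_hom U fscale Ug actU multU (wdelta []) W sW Wg actW multW oneW \<psi>'
                   \<and> (\<forall>x. \<psi>' (\<phi>L x) = \<psi> x) \<longrightarrow> (\<forall>u\<in>U. \<psi>' u = \<psi>b u))"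
proof -
  interpret pbw_univ \<chi> sL Lg actL br A sA Ag actA multA oneA \<phi>A E B \<phi> \<phi>L prec lam
      W sW Wg actW multW oneW \<psi>
    using assms by unfold_locales
  show ?thesis
    using yd_algebra_hom_psi_ext psi_ext_phiL yd_algebra_hom_unique by blast
qed

end

theorem theorem3p5:
  fixes \<chi> :: "'g::group_add \<Rightarrow> 'g \<Rightarrow> 'k::field"
    and sL :: "'k \<Rightarrow> 'l::ab_group_add \<Rightarrow> 'l" and Lg :: "'g \<Rightarrow> 'l set"
    and actL :: "'g \<Rightarrow> 'l \<Rightarrow> 'l" and br :: "'l \<Rightarrow> 'l \<Rightarrow> 'l"
    and A :: "'a::ab_group_add set" and sA :: "'k \<Rightarrow> 'a \<Rightarrow> 'a" and Ag :: "'g \<Rightarrow> 'a set"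
    and actA :: "'g \<Rightarrow> 'a \<Rightarrow> 'a" and multA :: "'a \<Rightarrow> 'a \<Rightarrow> 'a" and oneA :: 'a
    and \<phi>A :: "'l \<Rightarrow> 'a"
    and E :: "'l set" and B :: "'b set" and \<phi> :: "'l \<Rightarrow> 'b"
    and \<phi>L :: "'l \<Rightarrow> ('b list \<Rightarrow> 'k)"
    and prec :: "'b \<Rightarrow> 'b \<Rightarrow> bool"
    and lam :: "('b list \<Rightarrow> 'k) \<Rightarrow> ('b list \<Rightarrow> 'k)"
  defines "d \<equiv> letter_deg Lg E \<phi>"
    and "U \<equiv> FP B prec"
    and "Ug \<equiv> (\<lambda>g. FBstar_gr B (letter_deg Lg E \<phi>) g \<inter> FP B prec)"
    and "actU \<equiv> act_FBstar (\<lambda>g b. \<phi>L (actL g (inv_into E \<phi> b)))"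
    and "multU \<equiv> (\<lambda>u v. lam (conc u v))"
  assumes bichar: "bicharacter \<chi>"
    and mlie: "braided_mlie_witness \<chi> UNIV sL Lg actL br A sA Ag actA multA oneA \<phi>A"
    and braid: "braiding_by \<chi> UNIV sL Lg actL"
    and basis: "basis_on UNIV sL E"
    and homog: "\<forall>e\<in>E. \<exists>g. e \<in> Lg g"
    and bij: "bij_betw \<phi> E B"
    and phiL_lin: "lin_on UNIV sL (FBstar B) fscale \<phi>L"
    and phiL_E: "\<forall>e\<in>E. \<phi>L e = wdelta [\<phi> e]"
    and order: "strict_total_order_on B prec"
    and lam_lin: "lin_on (FBstar B) fscale (FP B prec) fscale lam"
    and lam_i: "\<forall>w\<in>Pwords B prec. lam (wdelta w) = wdelta w"
    and lam_ii: "\<forall>u v. set u \<subseteq> B \<longrightarrow> set v \<subseteq> B \<longrightarrow> (\<forall>b\<in>B. \<forall>c\<in>B.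
        lam (wdelta (u @ b # c # v)) =
          fscale (\<chi> (d b) (d c)) (lam (wdelta (u @ c # b # v)))
          + lam (conc (conc (wdelta u) (\<phi>L (br (inv_into E \<phi> b) (inv_into E \<phi> c)))) (wdelta v)))"
    and lam_iii: "\<forall>u\<in>FBstar B. \<forall>v\<in>FBstar B.
        lam (conc u v) = lam (conc (lam u) v) \<and> lam (conc u v) = lam (conc u (lam v))"
  shows "yd_algebra U fscale Ug actU multU (wdelta [])
    \<and> lie_hom_minus \<chi> UNIV sL Lg actL br U fscale Ug actU multU \<phi>L
    \<and> (\<forall>(W :: 'w::ab_group_add set) sW Wg actW multW oneW \<psi>.
         yd_algebra W sW Wg actW multW oneW
         \<and> lie_hom_minus \<chi> UNIV sL Lg actL br W sW Wg actW multW \<psi> \<longrightarrow>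
         (\<exists>\<psi>b. yd_algebra_hom U fscale Ug actU multU (wdelta []) W sW Wg actW multW oneW \<psi>b
               \<and> (\<forall>x. \<psi>b (\<phi>L x) = \<psi> x)
               \<and> (\<forall>\<psi>'. yd_algebra_hom U fscale Ug actU multU (wdelta []) W sW Wg actW multW oneW \<psi>'
                        \<and> (\<forall>x. \<psi>' (\<phi>L x) = \<psi> x) \<longrightarrow> (\<forall>u\<in>U. \<psi>' u = \<psi>b u))))"
proof -
  interpret pbw \<chi> sL Lg actL br A sA Ag actA multA oneA \<phi>A E B \<phi> \<phi>L prec lam
    using bichar mlie braid basis homog bij phiL_lin phiL_E order lam_lin lam_i lam_ii lam_iii
    unfolding d_def by unfold_locales
  show ?thesis
    unfolding U_def Ug_def actU_def multU_def
    using yd_algebra_U lie_hom_phiL universal_property by blast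
qed

end
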